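(* Let $V$ be a complex vector space of dimension $2m+1$ with a non-degenerate symmetric bilinear form $g_{ab}$, $S$ a spinor representation with $\gamma$-matrices $\gamma_{aA}{}^B$, and let $\alpha^A,\beta^A\in S$ be two pure spinors not proportional to each other. Then: (i) the $\gamma$-planes associated to $\alpha^A$ and $\beta^A$ intersect in a totally null $(m-1)$-dimensional subspace if and only if $$\alpha^{aA}\beta_a{}^B=\alpha^A\beta^B-2\,\beta^A\alpha^B=-\alpha^{(A}\beta^{B)}+3\,\alpha^{[A}\beta^{B]};$$ (ii) the $\gamma$-planes associated to $\alpha^A$ and $\beta^A$ intersect in a totally null $(m-k)$-dimensional subspace with $k=1$ or $k=2$ if and only if $$\alpha^{a(A}\beta_a{}^{B)}=-\alpha^{(A}\beta^{B)}.$$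
   Context: Abstract index notation: lower-case indices for $V$ (raised/lowered with $g$), upper-case indices for the spinor space $S$ (dimension $2^m$), raised/lowered with a spin-invariant bilinear form. The $\gamma$-matrices satisfy $\gamma_{(a|A}{}^C\gamma_{|b)C}{}^B=-g_{ab}\delta_A{}^B$. For a spinor $\alpha^A$ write $\alpha_a{}^A:=\alpha^B\gamma_{aB}{}^A$. A non-zero spinor $\alpha^A$ is pure if the kernel of the map $V\to S$, $X^a\mapsto X^a\alpha_a{}^A$, has dimension $m$; this kernel (a totally null $m$-dimensional subspace) is the $\gamma$-plane associated to $\alpha^A$. Round/square brackets denote symmetrisation/skew-symmetrisation. *)

theory Defs
  imports "HOL-Analysis.Analysis"
begin

text \<open>Coordinates: V = complex^'i (index a), S = complex^'j (index A).
  The metric g_ab is a matrix g $ a $ b; gamma a $ A $ B is gamma_{aA}^B.\<close>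

definition bilin :: "complex^'i::finite^'i \<Rightarrow> complex^'i \<Rightarrow> complex^'i \<Rightarrow> complex" where
  "bilin g X Y = (\<Sum>a\<in>UNIV. \<Sum>b\<in>UNIV. g $ a $ b * X $ a * Y $ b)"

definition clifford_rel :: "complex^'i::finite^'i \<Rightarrow> ('i::finite \<Rightarrow> complex^'j::finite^'j) \<Rightarrow> bool" where
  "clifford_rel g \<gamma> \<longleftrightarrow> (\<forall>a b A B.
     ((\<Sum>C\<in>UNIV. \<gamma> a $ A $ C * \<gamma> b $ C $ B) + (\<Sum>C\<in>UNIV. \<gamma> b $ A $ C * \<gamma> a $ C $ B)) / 2
       = - g $ a $ b * (if A = B then 1 else 0))"

text \<open>alpha_a^A = alpha^B gamma_{aB}^A\<close>
definition spin_act :: "('i::finite \<Rightarrow> complex^'j::finite^'j) \<Rightarrow> complex^'j \<Rightarrow> 'i \<Rightarrow> complex^'j" where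
  "spin_act \<gamma> \<alpha> a = (\<chi> A. \<Sum>B\<in>UNIV. \<alpha> $ B * \<gamma> a $ B $ A)"

definition gamma_plane :: "('i::finite \<Rightarrow> complex^'j::finite^'j) \<Rightarrow> complex^'j \<Rightarrow> (complex^'i) set" where
  "gamma_plane \<gamma> \<alpha> = {X. (\<Sum>a\<in>UNIV. X $ a *s spin_act \<gamma> \<alpha> a) = 0}"

definition pure_spinor :: "('i::finite \<Rightarrow> complex^'j::finite^'j) \<Rightarrow> nat \<Rightarrow> complex^'j \<Rightarrow> bool" where
  "pure_spinor \<gamma> m \<alpha> \<longleftrightarrow> \<alpha> \<noteq> 0 \<and> vec.dim (gamma_plane \<gamma> \<alpha>) = m"

definition totally_null :: "complex^'i::finite^'i \<Rightarrow> (complex^'i) set \<Rightarrow> bool" where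
  "totally_null g W \<longleftrightarrow> (\<forall>X\<in>W. \<forall>Y\<in>W. bilin g X Y = 0)"

text \<open>alpha^{aA} beta_a^B = g^{ab} alpha_a^A beta_b^B\<close>
definition contr :: "complex^'i::finite^'i \<Rightarrow> ('i::finite \<Rightarrow> complex^'j::finite^'j) \<Rightarrow> complex^'j \<Rightarrow> complex^'j \<Rightarrow> complex^'j^'j" where
  "contr g \<gamma> \<alpha> \<beta> = (\<chi> A B. \<Sum>a\<in>UNIV. \<Sum>b\<in>UNIV.
      matrix_inv g $ a $ b * spin_act \<gamma> \<alpha> a $ A * spin_act \<gamma> \<beta> b $ B)"

end

(*
  The gamma-plane of a pure spinor is a maximal totally null subspace, and a pure spinor is
  determined up to scale by its gamma-plane: each null vector of a Witt basis halves the
  dimension of the common kernel of Clifford multiplication, and the spinor space has dimension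
  2^m. Choose a Witt basis n_i, n'_i, u (i < m) such that the n_i span the gamma-plane of alpha,
  the n_i with i < r span the intersection of the two planes, and the n_i (i < r) together with
  the n'_i (r <= i) span the gamma-plane of beta. In the dual basis n'_i, n_i, u the contraction
  alpha^{aA} beta_a^B becomes the sum over r <= i < m of (n'_i.alpha)^A (n_i.beta)^B plus
  (u.alpha)^A (u.beta)^B, where u.alpha = e alpha, u.beta = e' beta and e^2 = -1. For m - r = 1
  the remaining term is a multiple of beta^A alpha^B, which gives (i); for m - r = 2 the two
  remaining terms are skew in A and B, which gives (ii). Conversely, letting n_r (and n_{r+1})
  act on the assumed identity isolates a single term that would have to be a multiple of alpha,
  which the Clifford relations exclude when m - r is larger.
*)

theory Submission
  imports Defs
begin

section \<open>Finite families of vectors\<close>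

definition independent_family :: "(nat \<Rightarrow> 'a::field^'n::finite) \<Rightarrow> nat \<Rightarrow> bool" where
  "independent_family v p \<longleftrightarrow> (\<forall>c. (\<Sum>i<p. c i *s v i) = 0 \<longrightarrow> (\<forall>i<p. c i = 0))"

definition append_family :: "nat \<Rightarrow> (nat \<Rightarrow> 'a) \<Rightarrow> (nat \<Rightarrow> 'a) \<Rightarrow> nat \<Rightarrow> 'a" where
  "append_family p v w i = (if i < p then v i else w (i - p))"

lemma sum_lessThan_add: "(\<Sum>i<a + (b::nat). f i) = (\<Sum>i<a. f i) + (\<Sum>i<b. f (a + i))"
  by (induction b) (simp_all add: add.assoc)

lemma sum_lessThan_delta:
  "(\<Sum>i<(p::nat). a i * (if l = i then 1 else 0)) = (if l < p then a l else (0::'a::comm_semiring_1))"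
  "(\<Sum>i<(p::nat). a i * (if i = l then 1 else 0)) = (if l < p then a l else (0::'a::comm_semiring_1))"
  by (simp_all add: if_distrib cong: if_cong)

lemma sum_lessThan_kronecker:
  assumes "j < (p::nat)" "\<And>i. i < p \<Longrightarrow> e i = (if i = j then 1 else 0)"
  shows "(\<Sum>i<p. c i * e i) = (c j :: 'a::comm_semiring_1)"
proof -
  have "(\<Sum>i<p. c i * e i) = (\<Sum>i\<in>{j}. c i * e i)"
    by (rule sum.mono_neutral_right) (use assms in auto)
  then show ?thesis by (simp add: assms)
qed

lemma sum_fun_upd_lessThan: "(\<Sum>i<(p::nat). (c(p:=z)) i *s (v i :: 'a::field^'n)) = (\<Sum>i<p. c i *s v i)"
  by (rule sum.cong) auto

lemma sum_append_family:
  "(\<Sum>i<p + q. c i *s append_family p v w i) = (\<Sum>i<p. c i *s v i) + (\<Sum>i<q. c (p + i) *s w i)"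
  unfolding sum_lessThan_add append_family_def by simp

lemma independent_family_inj:
  assumes "independent_family v p" shows "inj_on v {..<p}"
proof (rule inj_onI, rule ccontr)
  fix i j assume ij: "i \<in> {..<p}" "j \<in> {..<p}" "v i = v j" "i \<noteq> j"
  define c where "c = (\<lambda>k. if k = i then (1::'a) else if k = j then -1 else 0)"
  have "(\<Sum>k<p. c k *s v k) = (\<Sum>k\<in>{i,j}. c k *s v k)"
    by (rule sum.mono_neutral_right) (use ij in \<open>auto simp: c_def\<close>)
  also have "\<dots> = 0" using ij by (simp add: c_def)
  finally have "c i = 0" using assms ij unfolding independent_family_def by blast
  then show False by (simp add: c_def)
qed

lemma independent_family_image:
  assumes "independent_family v p" shows "vec.independent (v ` {..<p})"
proof (subst vec.independent_explicit, intro conjI allI impI ballI)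
  show "finite (v ` {..<p})" by simp
next
  fix c x assume s: "(\<Sum>y\<in>v ` {..<p}. c y *s y) = 0" and x: "x \<in> v ` {..<p}"
  have "(\<Sum>i<p. (c \<circ> v) i *s v i) = 0"
    using s by (simp add: sum.reindex[OF independent_family_inj[OF assms]])
  then show "c x = 0" using assms x unfolding independent_family_def by auto
qed

lemma card_independent_family: "independent_family v p \<Longrightarrow> card (v ` {..<p}) = p"
  using independent_family_inj card_image by fastforce

lemma independent_family_le_CARD:
  "independent_family (v :: nat \<Rightarrow> 'a::field^'n::finite) p \<Longrightarrow> p \<le> CARD('n)"
  using vec.independent_card_le_dim[of "v ` {..<p}" UNIV] independent_family_image
    card_independent_family vec_dim_card
  by (metis subset_UNIV)

lemma span_family_image:
  assumes "inj_on v {..<p}"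
  shows "vec.span ((v :: nat \<Rightarrow> 'a::field^'n::finite) ` {..<p}) = {z. \<exists>c. z = (\<Sum>i<p. c i *s v i)}"
proof -
  have "vec.span (v ` {..<p}) = range (\<lambda>u. \<Sum>x\<in>v ` {..<p}. u x *s x)"
    by (rule vec.span_finite) simp
  also have "\<dots> = {z. \<exists>c. z = (\<Sum>i<p. c i *s v i)}"
  proof (intro set_eqI iffI)
    fix z assume "z \<in> range (\<lambda>u. \<Sum>x\<in>v ` {..<p}. u x *s x)"
    then obtain u where "z = (\<Sum>x\<in>v ` {..<p}. u x *s x)" by blast
    then have "z = (\<Sum>i<p. (u \<circ> v) i *s v i)" by (simp add: sum.reindex[OF assms])
    then show "z \<in> {z. \<exists>c. z = (\<Sum>i<p. c i *s v i)}" by blast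
  next
    fix z assume "z \<in> {z. \<exists>c. z = (\<Sum>i<p. c i *s v i)}"
    then obtain c where z: "z = (\<Sum>i<p. c i *s v i)" by blast
    have "z = (\<Sum>x\<in>v ` {..<p}. c (the_inv_into {..<p} v x) *s x)"
      unfolding z by (subst sum.reindex[OF assms]) (auto simp: the_inv_into_f_f[OF assms])
    then show "z \<in> range (\<lambda>u. \<Sum>x\<in>v ` {..<p}. u x *s x)"
      unfolding image_iff by (rule bexI[of _ "\<lambda>x. c (the_inv_into {..<p} v x)"]) simp_all
  qed
  finally show ?thesis .
qed

lemma independent_family_spans:
  assumes "independent_family (v :: nat \<Rightarrow> 'a::field^'n::finite) (CARD('n))"
  obtains c where "z = (\<Sum>i<CARD('n). c i *s v i)"
proof -
  have "UNIV \<subseteq> vec.span (v ` {..<CARD('n)})"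
    using vec.card_eq_dim[of "v ` {..<CARD('n)}" UNIV] independent_family_image[OF assms]
      card_independent_family[OF assms]
    by (simp add: vec_dim_card card_cart_basis)
  then show ?thesis using span_family_image[OF independent_family_inj[OF assms]] that by auto
qed

lemma subspace_obtain_basis_family:
  assumes "vec.subspace W"
  obtains v where "independent_family v (vec.dim W)" "\<forall>i<vec.dim W. v i \<in> W"
    "\<forall>w\<in>W. \<exists>c. w = (\<Sum>i<vec.dim W. c i *s v i)"
proof -
  obtain B where B: "B \<subseteq> W" "vec.independent B" "W \<subseteq> vec.span B" "card B = vec.dim W"
    using vec.basis_exists by blast
  obtain h where "bij_betw h {..<vec.dim W} B"
    using ex_bij_betw_nat_finite[OF vec.finiteI_independent[OF B(2)]] B(4)
    by (metis atLeast0LessThan)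
  then have inj: "inj_on h {..<vec.dim W}" and img: "h ` {..<vec.dim W} = B"
    by (auto simp: bij_betw_def)
  have "independent_family h (vec.dim W)"
    unfolding independent_family_def
  proof (intro allI impI)
    fix c i assume s: "(\<Sum>i<vec.dim W. c i *s h i) = 0" and i: "i < vec.dim W"
    let ?c = "\<lambda>x. c (the_inv_into {..<vec.dim W} h x)"
    have "(\<Sum>x\<in>B. ?c x *s x) = (\<Sum>i<vec.dim W. c i *s h i)"
      unfolding img[symmetric] by (subst sum.reindex[OF inj]) (auto simp: the_inv_into_f_f[OF inj])
    moreover have indB: "\<forall>c. (\<Sum>v\<in>B. c v *s v) = 0 \<longrightarrow> (\<forall>v\<in>B. c v = 0)"
      using B(2) vec.independent_explicit by blast
    ultimately have "\<forall>x\<in>B. ?c x = 0" using s indB[rule_format, of ?c] by simp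
    then show "c i = 0" using img i the_inv_into_f_f[OF inj] by force
  qed
  moreover have "\<forall>i<vec.dim W. h i \<in> W" using img B(1) by auto
  moreover have "\<forall>w\<in>W. \<exists>c. w = (\<Sum>i<vec.dim W. c i *s h i)"
    using B(3) span_family_image[OF inj] img by auto
  ultimately show ?thesis using that by blast
qed

lemma independent_family_fun_upd:
  assumes "independent_family v p" "w \<notin> vec.span (v ` {..<p})"
  shows "independent_family (v(p := w)) (Suc p)"
  unfolding independent_family_def
proof (intro allI impI)
  fix c i assume s: "(\<Sum>i<Suc p. c i *s (v(p := w)) i) = 0" and i: "i < Suc p"
  have s2: "(\<Sum>i<p. c i *s v i) + c p *s w = 0"
    using s by (simp add: sum_fun_upd_lessThan[where p=p] add.commute)
  have cp: "c p = 0"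
  proof (rule ccontr)
    assume cp: "c p \<noteq> 0"
    have "w = (- inverse (c p)) *s (\<Sum>i<p. c i *s v i)"
      using s2 cp by (simp add: vec_eq_iff field_simps add_eq_0_iff)
    also have "\<dots> \<in> vec.span (v ` {..<p})"
      by (intro vec.span_scale vec.span_sum) (auto intro: vec.span_base)
    finally show False using assms(2) by simp
  qed
  then have "\<forall>i<p. c i = 0" using s2 assms(1) unfolding independent_family_def by simp
  then show "c i = 0" using cp i less_Suc_eq by auto
qed

lemma independent_family_extend_one:
  assumes "independent_family v p" "\<forall>i<p. v i \<in> W" "p < vec.dim W"
  obtains w where "w \<in> W" "independent_family (v(p := w)) (Suc p)"
proof -
  have "\<not> W \<subseteq> vec.span (v ` {..<p})"
  proof
    assume "W \<subseteq> vec.span (v ` {..<p})"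
    then have "vec.dim W \<le> card (v ` {..<p})" by (rule vec.dim_le_card) simp
    then show False using card_independent_family[OF assms(1)] assms(3) by simp
  qed
  then show ?thesis using independent_family_fun_upd[OF assms(1)] that by blast
qed

lemma independent_family_fun_upd_diff_ne_0:
  assumes "independent_family (v(p := z)) (Suc p)"
  shows "z - (\<Sum>i<p. c i *s v i) \<noteq> 0"
proof
  assume "z - (\<Sum>i<p. c i *s v i) = 0"
  then have "(\<Sum>i<Suc p. ((\<lambda>i. - c i)(p := 1)) i *s (v(p := z)) i) = 0"
    by (simp add: sum_negf)
  then have "((\<lambda>i. - c i)(p := 1)) p = 0"
    using assms unfolding independent_family_def by blast
  then show False by simp
qed

lemma independent_family_extend:
  assumes "independent_family v p" "\<forall>i<p. v i \<in> W" "p \<le> d" "d \<le> vec.dim W"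
  shows "\<exists>v'. independent_family v' d \<and> (\<forall>i<p. v' i = v i) \<and> (\<forall>i<d. v' i \<in> W)"
  using assms(3,4)
proof (induction d)
  case 0 then show ?case using assms(1,2) by (intro exI[of _ v]) auto
next
  case (Suc d)
  show ?case
  proof (cases "p = Suc d")
    case True then show ?thesis using assms(1,2) by (intro exI[of _ v]) auto
  next
    case False
    then obtain v' where v': "independent_family v' d" "\<forall>i<p. v' i = v i" "\<forall>i<d. v' i \<in> W"
      using Suc.IH Suc.prems by fastforce
    obtain w where w: "w \<in> W" "independent_family (v'(d := w)) (Suc d)"
      using independent_family_extend_one[OF v'(1) v'(3)] Suc.prems by auto
    have "\<forall>i<p. (v'(d := w)) i = v i" using v' False Suc.prems(1) by auto
    moreover have "\<forall>i<Suc d. (v'(d := w)) i \<in> W" using v' w by (auto simp: less_Suc_eq)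
    ultimately show ?thesis using w(2) by blast
  qed
qed

section \<open>The metric and the Clifford action\<close>

definition dotc :: "complex^'n::finite \<Rightarrow> complex^'n \<Rightarrow> complex" where
  "dotc x y = (\<Sum>a\<in>UNIV. x $ a * y $ a)"

definition gamma_act ::
    "('i::finite \<Rightarrow> complex^'j::finite^'j) \<Rightarrow> complex^'j \<Rightarrow> complex^'i \<Rightarrow> complex^'j" where
  "gamma_act \<gamma> \<psi> X = (\<chi> A. \<Sum>a\<in>UNIV. \<Sum>B\<in>UNIV. X $ a * \<psi> $ B * \<gamma> a $ B $ A)"

lemma gamma_act_eq_spin_act: "gamma_act \<gamma> \<psi> X = (\<Sum>a\<in>UNIV. X $ a *s spin_act \<gamma> \<psi> a)"
  by (simp add: vec_eq_iff gamma_act_def spin_act_def sum_distrib_left mult.assoc)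

lemma gamma_plane_eq: "gamma_plane \<gamma> \<alpha> = {X. gamma_act \<gamma> \<alpha> X = 0}"
  by (simp add: gamma_plane_def gamma_act_eq_spin_act)

lemma gamma_act_zero [simp]: "gamma_act \<gamma> 0 X = 0" "gamma_act \<gamma> \<psi> 0 = 0"
  by (simp_all add: vec_eq_iff gamma_act_def)

lemma gamma_act_add_spinor: "gamma_act \<gamma> (\<psi> + \<phi>) X = gamma_act \<gamma> \<psi> X + gamma_act \<gamma> \<phi> X"
  by (simp add: vec_eq_iff gamma_act_def distrib_left distrib_right sum.distrib)

lemma gamma_act_scale_spinor: "gamma_act \<gamma> (c *s \<psi>) X = c *s gamma_act \<gamma> \<psi> X"
  by (simp add: vec_eq_iff gamma_act_def sum_distrib_left mult_ac)

lemma gamma_act_neg_spinor: "gamma_act \<gamma> (- \<psi>) X = - gamma_act \<gamma> \<psi> X"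
  by (simp add: vec_eq_iff gamma_act_def sum_negf)

lemma gamma_act_diff_spinor: "gamma_act \<gamma> (\<psi> - \<phi>) X = gamma_act \<gamma> \<psi> X - gamma_act \<gamma> \<phi> X"
  by (simp add: vec_eq_iff gamma_act_def algebra_simps sum_subtractf)

lemma gamma_act_sum_spinor: "gamma_act \<gamma> (\<Sum>l\<in>L. f l) X = (\<Sum>l\<in>L. gamma_act \<gamma> (f l) X)"
  by (induction L rule: infinite_finite_induct) (simp_all add: gamma_act_add_spinor)

lemma gamma_act_add_vector: "gamma_act \<gamma> \<psi> (X + Y) = gamma_act \<gamma> \<psi> X + gamma_act \<gamma> \<psi> Y"
  by (simp add: vec_eq_iff gamma_act_def distrib_left distrib_right sum.distrib)

lemma gamma_act_scale_vector: "gamma_act \<gamma> \<psi> (c *s X) = c *s gamma_act \<gamma> \<psi> X"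
  by (simp add: vec_eq_iff gamma_act_def sum_distrib_left mult_ac)

lemma linear_gamma_act_spinor: "Vector_Spaces.linear (*s) (*s) (\<lambda>\<psi>. gamma_act \<gamma> \<psi> X)"
  unfolding Vector_Spaces.linear_iff using vec.vector_space_axioms
  by (simp add: gamma_act_add_spinor gamma_act_scale_spinor)

lemma subspace_gamma_plane: "vec.subspace (gamma_plane \<gamma> \<alpha>)"
  unfolding gamma_plane_eq vec.subspace_def by (simp add: gamma_act_add_vector gamma_act_scale_vector)

lemma gamma_act_gamma_act_component:
  "gamma_act \<gamma> (gamma_act \<gamma> \<psi> X) Y $ A =
     (\<Sum>a\<in>UNIV. \<Sum>b\<in>UNIV. \<Sum>B\<in>UNIV. X $ a * Y $ b * \<psi> $ B * (\<Sum>C\<in>UNIV. \<gamma> a $ B $ C * \<gamma> b $ C $ A))"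
proof -
  let ?f = "\<lambda>b a B C. Y $ b * (X $ a * \<psi> $ B * \<gamma> a $ B $ C) * \<gamma> b $ C $ A"
  have "gamma_act \<gamma> (gamma_act \<gamma> \<psi> X) Y $ A = (\<Sum>b\<in>UNIV. \<Sum>C\<in>UNIV. \<Sum>a\<in>UNIV. \<Sum>B\<in>UNIV. ?f b a B C)"
    by (simp add: gamma_act_def sum_distrib_left sum_distrib_right)
  also have "\<dots> = (\<Sum>b\<in>UNIV. \<Sum>a\<in>UNIV. \<Sum>C\<in>UNIV. \<Sum>B\<in>UNIV. ?f b a B C)"
    by (rule sum.cong[OF refl], rule sum.swap)
  also have "\<dots> = (\<Sum>b\<in>UNIV. \<Sum>a\<in>UNIV. \<Sum>B\<in>UNIV. \<Sum>C\<in>UNIV. ?f b a B C)"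
    by (rule sum.cong[OF refl], rule sum.cong[OF refl], rule sum.swap)
  also have "\<dots> = (\<Sum>a\<in>UNIV. \<Sum>b\<in>UNIV. \<Sum>B\<in>UNIV. \<Sum>C\<in>UNIV. ?f b a B C)"
    by (rule sum.swap)
  also have "\<dots> = (\<Sum>a\<in>UNIV. \<Sum>b\<in>UNIV. \<Sum>B\<in>UNIV. X $ a * Y $ b * \<psi> $ B * (\<Sum>C\<in>UNIV. \<gamma> a $ B $ C * \<gamma> b $ C $ A))"
    by (simp add: sum_distrib_left mult_ac)
  finally show ?thesis .
qed

lemma bilin_add_left: "bilin g (X + Y) Z = bilin g X Z + bilin g Y Z"
  by (simp add: bilin_def algebra_simps sum.distrib)
lemma bilin_add_right: "bilin g Z (X + Y) = bilin g Z X + bilin g Z Y"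
  by (simp add: bilin_def algebra_simps sum.distrib)
lemma bilin_scale_left: "bilin g (c *s X) Z = c * bilin g X Z"
  by (simp add: bilin_def sum_distrib_left mult_ac)
lemma bilin_scale_right: "bilin g Z (c *s X) = c * bilin g Z X"
  by (simp add: bilin_def sum_distrib_left mult_ac)
lemma bilin_zero [simp]: "bilin g 0 Z = 0" "bilin g Z 0 = 0"
  by (simp_all add: bilin_def)
lemma bilin_diff_left: "bilin g (X - Y) Z = bilin g X Z - bilin g Y Z"
  by (simp add: bilin_def algebra_simps sum_subtractf)
lemma bilin_diff_right: "bilin g Z (X - Y) = bilin g Z X - bilin g Z Y"
  by (simp add: bilin_def algebra_simps sum_subtractf)
lemma bilin_neg_left: "bilin g (- X) Z = - bilin g X Z"
  by (simp add: bilin_def sum_negf)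
lemma bilin_neg_right: "bilin g Z (- X) = - bilin g Z X"
  by (simp add: bilin_def sum_negf)
lemma bilin_sum_left: "bilin g (\<Sum>l\<in>L. f l) Z = (\<Sum>l\<in>L. bilin g (f l) Z)"
  by (induction L rule: infinite_finite_induct) (simp_all add: bilin_add_left)
lemma bilin_sum_right: "bilin g Z (\<Sum>l\<in>L. f l) = (\<Sum>l\<in>L. bilin g Z (f l))"
  by (induction L rule: infinite_finite_induct) (simp_all add: bilin_add_right)

lemmas bilin_simps = bilin_add_left bilin_add_right bilin_scale_left bilin_scale_right
  bilin_diff_left bilin_diff_right bilin_neg_left bilin_neg_right bilin_sum_left bilin_sum_right

lemma bilin_commute:
  assumes "transpose g = g" shows "bilin g X Y = bilin g Y X"
proof -
  have "g $ b $ a = g $ a $ b" for a b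
    by (metis assms transpose_def vec_lambda_beta)
  then show ?thesis unfolding bilin_def by (subst sum.swap) (simp add: mult_ac)
qed

lemma bilin_eq_dotc: "bilin g X Y = dotc X (g *v Y)"
  by (simp add: bilin_def dotc_def matrix_vector_mult_def sum_distrib_left mult_ac)

lemma dotc_add_left: "dotc (x + y) z = dotc x z + dotc y z"
  by (simp add: dotc_def algebra_simps sum.distrib)
lemma dotc_scale_left: "dotc (c *s x) z = c * dotc x z"
  by (simp add: dotc_def sum_distrib_left mult_ac)
lemma dotc_sum_left: "dotc (\<Sum>l\<in>L. f l) z = (\<Sum>l\<in>L. dotc (f l) z)"
  by (induction L rule: infinite_finite_induct) (simp_all add: dotc_add_left, simp_all add: dotc_def)

lemma dotc_matrix_vector_mult: "dotc (M *v x) y = dotc x (transpose M *v y)"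
  unfolding dotc_def matrix_vector_mult_def transpose_def
  by (simp add: sum_distrib_left sum_distrib_right mult_ac) (rule sum.swap)

lemma matrix_mul_matrix_inv:
  assumes "invertible (A::'a::semiring_1^'n^'n)"
  shows "A ** matrix_inv A = mat 1" "matrix_inv A ** A = mat 1"
  using someI_ex[OF assms[unfolded invertible_def]] by (simp_all add: matrix_inv_def)

lemma bilin_nondegenerate:
  assumes "invertible g" "\<And>Y. bilin g X Y = 0" shows "X = 0"
proof (rule vec_eq_iff[THEN iffD2], rule allI)
  fix b
  let ?Y = "matrix_inv g *v axis b 1"
  have "g *v ?Y = axis b 1"
    using matrix_mul_matrix_inv[OF assms(1)] by (simp add: matrix_vector_mul_assoc)
  then have "bilin g X ?Y = X $ b"
    by (simp add: bilin_eq_dotc dotc_def axis_def if_distrib cong: if_cong)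
  then show "X $ b = 0 $ b" using assms(2) by simp
qed

lemma independent_family_if_dual:
  assumes "\<forall>k<N. \<forall>l<N. bilin g (f k) (f' l) = (if k = l then 1 else 0)"
  shows "independent_family f' N"
  unfolding independent_family_def
proof (intro allI impI)
  fix c k assume s: "(\<Sum>l<N. c l *s f' l) = 0" and k: "k < N"
  have "0 = bilin g (f k) (\<Sum>l<N. c l *s f' l)" using s by simp
  also have "\<dots> = (\<Sum>l<N. c l * (if k = l then 1 else 0))"
    by (simp add: bilin_sum_right bilin_scale_right) (rule sum.cong, auto simp: assms k)
  also have "\<dots> = c k" using k by (simp add: sum_lessThan_delta)
  finally show "c k = 0" by simp
qed

lemma independent_family_append:
  assumes v: "independent_family v p"
    and t1: "\<forall>l<q. \<forall>i<p. bilin g (t l) (v i) = 0"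
    and t2: "\<forall>l<q. \<forall>j<q. bilin g (t l) (w j) = (if l = j then 1 else 0)"
  shows "independent_family (append_family p v w) (p + q)"
  unfolding independent_family_def
proof (intro allI impI)
  fix c i assume s: "(\<Sum>i<p + q. c i *s append_family p v w i) = 0" and i: "i < p + q"
  have s2: "(\<Sum>i<p. c i *s v i) + (\<Sum>i<q. c (p + i) *s w i) = 0"
    using s unfolding sum_append_family .
  have d: "c (p + l) = 0" if l: "l < q" for l
  proof -
    have "bilin g (t l) ((\<Sum>i<p. c i *s v i) + (\<Sum>i<q. c (p + i) *s w i)) = 0" using s2 by simp
    moreover have "(\<Sum>i<p. c i * bilin g (t l) (v i)) = 0" using t1 l by simp
    moreover have "(\<Sum>i<q. c (p + i) * bilin g (t l) (w i)) = (\<Sum>i<q. c (p + i) * (if l = i then 1 else 0))"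
      by (rule sum.cong) (auto simp: t2 l)
    ultimately show ?thesis by (simp add: bilin_simps sum_lessThan_delta l)
  qed
  then have "(\<Sum>i<p. c i *s v i) = 0" using s2 by simp
  then have "\<forall>i<p. c i = 0" using v unfolding independent_family_def by blast
  then show "c i = 0" using d i by (metis add_diff_inverse_nat add_less_cancel_left)
qed

abbreviation dual_families ::
    "complex^'i::finite^'i \<Rightarrow> (nat \<Rightarrow> complex^'i) \<Rightarrow> (nat \<Rightarrow> complex^'i) \<Rightarrow> nat \<Rightarrow> bool" where
  "dual_families g v w p \<equiv> \<forall>i<p. \<forall>j<p. bilin g (v i) (w j) = (if i = j then 1 else 0)"

abbreviation null_family :: "complex^'i::finite^'i \<Rightarrow> (nat \<Rightarrow> complex^'i) \<Rightarrow> nat \<Rightarrow> bool" where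
  "null_family g v p \<equiv> \<forall>i<p. \<forall>j<p. bilin g (v i) (v j) = 0"

lemma exists_orthogonal_to_dual_family:
  fixes v :: "nat \<Rightarrow> complex^'i::finite"
  assumes P: "vec.subspace P" and x1: "\<forall>j<p. x j \<in> P" and x2: "dual_families g v x p"
    and nondeg: "\<forall>c. (\<forall>y\<in>P. bilin g (\<Sum>i<Suc p. c i *s v i) y = 0) \<longrightarrow> (\<forall>i<Suc p. c i = 0)"
  obtains w where "w \<in> P" "\<forall>i<p. bilin g (v i) w = 0" "bilin g (v p) w \<noteq> 0"
proof (rule ccontr)
  assume "\<not> thesis"
  then have H: "\<forall>w\<in>P. (\<forall>i<p. bilin g (v i) w = 0) \<longrightarrow> bilin g (v p) w = 0" using that by blast
  \<comment> \<open>then v p agrees on P with a combination of the v i, contradicting nondegeneracy\<close>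
  have eq: "bilin g (v p) y = (\<Sum>i<p. bilin g (v i) y * bilin g (v p) (x i))" if y: "y \<in> P" for y
  proof -
    define w where "w = y - (\<Sum>i<p. bilin g (v i) y *s x i)"
    have "w \<in> P" unfolding w_def using P y x1
      by (intro vec.subspace_diff vec.subspace_sum vec.subspace_scale) auto
    moreover have "bilin g (v l) w = 0" if l: "l < p" for l
      using x2 l by (simp add: w_def bilin_simps sum_lessThan_kronecker)
    ultimately have "bilin g (v p) w = 0" using H by blast
    then show ?thesis by (simp add: w_def bilin_simps mult.commute)
  qed
  define c where "c i = (if i < p then - bilin g (v p) (x i) else 1)" for i
  have "\<forall>y\<in>P. bilin g (\<Sum>i<Suc p. c i *s v i) y = 0"
  proof
    fix y assume y: "y \<in> P"
    have "bilin g (\<Sum>i<Suc p. c i *s v i) y = (\<Sum>i<p. c i * bilin g (v i) y) + bilin g (v p) y"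
      by (simp add: bilin_simps c_def)
    also have "(\<Sum>i<p. c i * bilin g (v i) y) = - (\<Sum>i<p. bilin g (v i) y * bilin g (v p) (x i))"
      by (simp add: c_def sum_negf[symmetric] mult.commute)
    finally show "bilin g (\<Sum>i<Suc p. c i *s v i) y = 0" using eq[OF y] by simp
  qed
  then have "c p = 0" using nondeg by blast
  then show False by (simp add: c_def)
qed

lemma dual_family_in_subspace:
  fixes v :: "nat \<Rightarrow> complex^'i::finite"
  assumes P: "vec.subspace P"
    and nondeg: "\<forall>c. (\<forall>y\<in>P. bilin g (\<Sum>i<p. c i *s v i) y = 0) \<longrightarrow> (\<forall>i<p. c i = 0)"
  shows "\<exists>x. (\<forall>j<p. x j \<in> P) \<and> dual_families g v x p"
  using nondeg
proof (induction p)
  case 0 show ?case by simp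
next
  case (Suc p)
  have "\<forall>c. (\<forall>y\<in>P. bilin g (\<Sum>i<p. c i *s v i) y = 0) \<longrightarrow> (\<forall>i<p. c i = 0)"
  proof (intro allI impI)
    fix c i assume h: "\<forall>y\<in>P. bilin g (\<Sum>i<p. c i *s v i) y = 0" and i: "i < p"
    have "(\<Sum>i<Suc p. (c(p := 0)) i *s v i) = (\<Sum>i<p. c i *s v i)"
      by (simp add: sum_fun_upd_lessThan)
    then have "\<forall>i<Suc p. (c(p := 0)) i = 0" using Suc.prems h by metis
    then show "c i = 0" using i by (metis fun_upd_apply less_Suc_eq nat_neq_iff)
  qed
  then obtain x where x1: "\<forall>j<p. x j \<in> P" and x2: "dual_families g v x p"
    using Suc.IH by blast
  obtain w where w1: "w \<in> P" and w2: "\<forall>i<p. bilin g (v i) w = 0" and w3: "bilin g (v p) w \<noteq> 0"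
    using exists_orthogonal_to_dual_family[OF P x1 x2 Suc.prems] .
  define y0 where "y0 = (1 / bilin g (v p) w) *s w"
  have y0P: "y0 \<in> P" unfolding y0_def using P w1 by (rule vec.subspace_scale)
  have y0a: "\<forall>i<p. bilin g (v i) y0 = 0" using w2 by (simp add: y0_def bilin_simps)
  have y0b: "bilin g (v p) y0 = 1" using w3 by (simp add: y0_def bilin_simps)
  define x' where "x' j = (if j = p then y0 else x j - bilin g (v p) (x j) *s y0)" for j
  have "\<forall>j<Suc p. x' j \<in> P"
    using x1 y0P P by (auto simp: x'_def less_Suc_eq intro!: vec.subspace_diff vec.subspace_scale)
  moreover have "dual_families g v x' (Suc p)"
    using x2 y0a y0b by (auto simp: x'_def less_Suc_eq bilin_simps)
  ultimately show ?case by blast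
qed

text \<open>Subtracting from each x j half of its Gram pairings along the null vectors n l makes the
  x j pairwise orthogonal without changing their pairing with the n i.\<close>

definition null_correction ::
    "complex^'i::finite^'i \<Rightarrow> (nat \<Rightarrow> complex^'i) \<Rightarrow> (nat \<Rightarrow> complex^'i) \<Rightarrow> nat \<Rightarrow> nat \<Rightarrow> complex^'i" where
  "null_correction g n x r j = x j - (1/2) *s (\<Sum>l<r. bilin g (x j) (x l) *s n l)"

lemma bilin_null_correction_right:
  "bilin g Y (null_correction g n x r j) = bilin g Y (x j) - (1/2) * (\<Sum>l<r. bilin g (x j) (x l) * bilin g Y (n l))"
  by (simp add: null_correction_def bilin_simps)

lemma null_correction_dual:
  assumes "null_family g n m" "\<forall>i<m. \<forall>j<r. bilin g (n i) (x j) = (if i = j then 1 else 0)"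
    "i < m" "j < r" "r \<le> m"
  shows "bilin g (n i) (null_correction g n x r j) = (if i = j then 1 else 0)"
  using assms by (simp add: bilin_null_correction_right)

lemma null_correction_null:
  assumes sym: "transpose g = g" and nn: "null_family g n m"
    and nx: "\<forall>i<m. \<forall>j<r. bilin g (n i) (x j) = (if i = j then 1 else 0)" and rm: "r \<le> m"
  shows "null_family g (null_correction g n x r) r"
proof (intro allI impI)
  fix i j assume i: "i < r" and j: "j < r"
  have xn: "bilin g (x k) (n l) = (if l = k then 1 else 0)" if "l < r" "k < r" for k l
    using nx[rule_format, of l k] that rm by (simp add: bilin_commute[OF sym, of "x k"])
  have sum_nx: "(\<Sum>l<r. c l * bilin g (n l) (x k)) = c k" "(\<Sum>l<r. c l * bilin g (x k) (n l)) = c k"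
    if "k < r" for c k
    using that nx xn rm by (auto intro!: sum_lessThan_kronecker)
  have sum_nn: "(\<Sum>l<r. c l * bilin g (n l) (n k)) = 0" if "k < r" for c k
    using nn that rm by simp
  show "bilin g (null_correction g n x r i) (null_correction g n x r j) = 0"
    unfolding null_correction_def
    using i j by (simp add: bilin_simps sum_nx sum_nn bilin_commute[OF sym, of "x j" "x i"])
qed

lemma bilin_null_correction_eq_0:
  assumes "\<forall>l<r. bilin g Y (n l) = 0" "bilin g Y (x j) = 0"
  shows "bilin g Y (null_correction g n x r j) = 0"
  using assms by (simp add: bilin_null_correction_right)

lemma gamma_act_rank_sum_zero:
  fixes x y :: "'a \<Rightarrow> complex^'j::finite"
  assumes "finite L" "\<forall>A B. (\<Sum>l\<in>L. x l $ A * y l $ B) = 0"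
  shows "\<forall>A B. (\<Sum>l\<in>L. gamma_act \<gamma> (x l) X $ A * y l $ B) = 0"
    "\<forall>A B. (\<Sum>l\<in>L. x l $ A * gamma_act \<gamma> (y l) X $ B) = 0"
proof -
  have left: "\<forall>A B. (\<Sum>l\<in>L. gamma_act \<gamma> (x l) X $ A * y l $ B) = 0"
    if "\<forall>A B. (\<Sum>l\<in>L. x l $ A * y l $ B) = 0" for x y :: "'a \<Rightarrow> complex^'j"
  proof (intro allI)
    fix A B
    have "(\<Sum>l\<in>L. y l $ B *s x l) = 0"
      using that by (simp add: vec_eq_iff mult.commute)
    then have "gamma_act \<gamma> (\<Sum>l\<in>L. y l $ B *s x l) X = 0" by simp
    then have "(\<Sum>l\<in>L. y l $ B *s gamma_act \<gamma> (x l) X) = 0"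
      by (simp add: gamma_act_sum_spinor gamma_act_scale_spinor)
    then show "(\<Sum>l\<in>L. gamma_act \<gamma> (x l) X $ A * y l $ B) = 0"
      by (simp add: vec_eq_iff mult.commute)
  qed
  show "\<forall>A B. (\<Sum>l\<in>L. gamma_act \<gamma> (x l) X $ A * y l $ B) = 0" using left[OF assms(2)] .
  have "\<forall>A B. (\<Sum>l\<in>L. y l $ A * x l $ B) = 0" using assms(2) by (simp add: mult.commute)
  then have yx: "\<forall>A B. (\<Sum>l\<in>L. gamma_act \<gamma> (y l) X $ A * x l $ B) = 0" by (rule left)
  show "\<forall>A B. (\<Sum>l\<in>L. x l $ A * gamma_act \<gamma> (y l) X $ B) = 0"
  proof (intro allI)
    fix A B show "(\<Sum>l\<in>L. x l $ A * gamma_act \<gamma> (y l) X $ B) = 0"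
      using yx[rule_format, of B A] by (simp add: mult.commute)
  qed
qed

lemma proportional_if_rank_one_symmetric:
  fixes \<alpha> w :: "complex^'j::finite"
  assumes "\<alpha> \<noteq> 0" "\<forall>A B. \<alpha> $ A * w $ B = w $ A * \<alpha> $ B"
  obtains c where "w = c *s \<alpha>"
proof -
  obtain A0 where A0: "\<alpha> $ A0 \<noteq> 0" using assms(1) by (auto simp: vec_eq_iff)
  have "w = (w $ A0 / \<alpha> $ A0) *s \<alpha>"
  proof (rule vec_eq_iff[THEN iffD2], rule allI)
    fix B
    have "\<alpha> $ A0 * w $ B = w $ A0 * \<alpha> $ B" using assms(2) by blast
    then show "w $ B = ((w $ A0 / \<alpha> $ A0) *s \<alpha>) $ B" using A0 by (simp add: field_simps)
  qed
  then show ?thesis using that by blast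
qed

section \<open>Clifford modules of an odd-dimensional orthogonal space\<close>

locale spin_rep =
  fixes m :: nat and g :: "complex^'i::finite^'i" and \<gamma> :: "'i \<Rightarrow> complex^'j::finite^'j"
  assumes dimV: "CARD('i) = 2 * m + 1"
    and dimS: "CARD('j) = 2 ^ m"
    and g_sym: "transpose g = g"
    and g_nondeg: "invertible g"
    and cliff: "clifford_rel g \<gamma>"
begin

abbreviation act :: "complex^'j \<Rightarrow> complex^'i \<Rightarrow> complex^'j" where
  "act \<equiv> gamma_act \<gamma>"

lemma bilin_g_commute: "bilin g X Y = bilin g Y X"
  using bilin_commute[OF g_sym] .

lemma gamma_anticomm:
  "(\<Sum>C\<in>UNIV. \<gamma> a $ B $ C * \<gamma> b $ C $ A) + (\<Sum>C\<in>UNIV. \<gamma> b $ B $ C * \<gamma> a $ C $ A)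
     = -2 * g $ a $ b * (if B = A then 1 else 0)"
proof -
  have "((\<Sum>C\<in>UNIV. \<gamma> a $ B $ C * \<gamma> b $ C $ A) + (\<Sum>C\<in>UNIV. \<gamma> b $ B $ C * \<gamma> a $ C $ A)) / 2
     = - g $ a $ b * (if B = A then 1 else 0)"
    using cliff unfolding clifford_rel_def by blast
  then show ?thesis by (simp add: field_simps)
qed

lemma act_anticomm: "act (act \<psi> X) Y + act (act \<psi> Y) X = (-2 * bilin g X Y) *s \<psi>"
proof (rule vec_eq_iff[THEN iffD2], rule allI)
  fix A
  let ?P = "\<lambda>a b B. (\<Sum>C\<in>UNIV. \<gamma> a $ B $ C * \<gamma> b $ C $ A)"
  have "act (act \<psi> Y) X $ A = (\<Sum>b\<in>UNIV. \<Sum>a\<in>UNIV. \<Sum>B\<in>UNIV. Y $ b * X $ a * \<psi> $ B * ?P b a B)"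
    by (rule gamma_act_gamma_act_component)
  also have "\<dots> = (\<Sum>a\<in>UNIV. \<Sum>b\<in>UNIV. \<Sum>B\<in>UNIV. Y $ b * X $ a * \<psi> $ B * ?P b a B)"
    by (rule sum.swap)
  finally have YX: "act (act \<psi> Y) X $ A = (\<Sum>a\<in>UNIV. \<Sum>b\<in>UNIV. \<Sum>B\<in>UNIV. X $ a * Y $ b * \<psi> $ B * ?P b a B)"
    by (simp add: mult_ac)
  have "(act (act \<psi> X) Y + act (act \<psi> Y) X) $ A
      = (\<Sum>a\<in>UNIV. \<Sum>b\<in>UNIV. \<Sum>B\<in>UNIV. X $ a * Y $ b * \<psi> $ B * (?P a b B + ?P b a B))"
    unfolding vector_add_component YX unfolding gamma_act_gamma_act_component
    by (simp add: sum.distrib distrib_left)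
  also have "\<dots> = (\<Sum>a\<in>UNIV. \<Sum>b\<in>UNIV. \<Sum>B\<in>UNIV. X $ a * Y $ b * \<psi> $ B * (-2 * g $ a $ b * (if B = A then 1 else 0)))"
    by (simp only: gamma_anticomm)
  also have "\<dots> = (\<Sum>a\<in>UNIV. \<Sum>b\<in>UNIV. X $ a * Y $ b * \<psi> $ A * (-2 * g $ a $ b))"
    by (simp add: if_distrib cong: if_cong)
  also have "\<dots> = ((-2 * bilin g X Y) *s \<psi>) $ A"
    by (simp add: bilin_def sum_distrib_left sum_distrib_right mult_ac)
  finally show "(act (act \<psi> X) Y + act (act \<psi> Y) X) $ A = ((-2 * bilin g X Y) *s \<psi>) $ A" .
qed

lemma act_act_swap: "act (act \<psi> X) Y = (-2 * bilin g X Y) *s \<psi> - act (act \<psi> Y) X"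
  using act_anticomm[of \<psi> X Y] by (simp add: eq_diff_eq)

lemma act_act_anticomm: "bilin g X Y = 0 \<Longrightarrow> act (act \<psi> X) Y = - act (act \<psi> Y) X"
  using act_act_swap[of \<psi> X Y] by simp

lemma act_act_self: "act (act \<psi> X) X = (- bilin g X X) *s \<psi>"
proof -
  have "act (act \<psi> X) X = (1/2) *s (act (act \<psi> X) X + act (act \<psi> X) X)"
    by (simp add: vec_eq_iff)
  also have "\<dots> = (- bilin g X X) *s \<psi>"
    by (simp add: act_anticomm)
  finally show ?thesis .
qed

lemma act_act_null: "bilin g X X = 0 \<Longrightarrow> act (act \<psi> X) X = 0"
  using act_act_self by simp

lemma bilin_eq_0_if_annihilate: "\<alpha> \<noteq> 0 \<Longrightarrow> act \<alpha> X = 0 \<Longrightarrow> act \<alpha> Y = 0 \<Longrightarrow> bilin g X Y = 0"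
  using act_anticomm[of \<alpha> X Y] by (simp add: vec.scale_eq_0_iff)

lemma dual_family_exists:
  assumes "independent_family v p"
  obtains x where "dual_families g v x p"
proof -
  have "\<forall>c. (\<forall>y\<in>UNIV. bilin g (\<Sum>i<p. c i *s v i) y = 0) \<longrightarrow> (\<forall>i<p. c i = 0)"
    using bilin_nondegenerate[OF g_nondeg] assms unfolding independent_family_def by blast
  then show ?thesis using dual_family_in_subspace[OF vec.subspace_UNIV] that by blast
qed

lemma independent_null_family_le:
  assumes "independent_family w p" "null_family g w p"
  shows "p \<le> m"
proof -
  obtain x where "dual_families g w x p"
    using dual_family_exists[OF assms(1)] .
  then have "independent_family (append_family p w x) (p + p)"
    using assms by (intro independent_family_append[where t = w]) auto
  then have "p + p \<le> CARD('i)" by (rule independent_family_le_CARD)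
  then show ?thesis using dimV by simp
qed

lemma eq_0_if_orthogonal_to_basis:
  assumes H: "independent_family H (CARD('i))" and X: "\<forall>k<CARD('i). bilin g X (H k) = 0"
  shows "X = 0"
proof (rule bilin_nondegenerate[OF g_nondeg])
  fix Y
  obtain c where "Y = (\<Sum>k<CARD('i). c k *s H k)" using independent_family_spans[OF H] .
  then show "bilin g X Y = 0" using X by (simp add: bilin_sum_right bilin_scale_right)
qed

lemma mem_maximal_null_subspace:
  assumes W: "vec.subspace W" and dW: "vec.dim W = m" and nW: "\<forall>X\<in>W. \<forall>Y\<in>W. bilin g X Y = 0"
    and aa: "bilin g a a = 0" and aW: "\<forall>Y\<in>W. bilin g a Y = 0"
  shows "a \<in> W"
proof (rule ccontr)
  assume "a \<notin> W"
  obtain b where b1: "independent_family b m" and b2: "\<forall>i<m. b i \<in> W"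
    and "\<forall>w\<in>W. \<exists>c. w = (\<Sum>i<m. c i *s b i)"
    by (rule subspace_obtain_basis_family[OF W, unfolded dW])
  have "vec.span (b ` {..<m}) \<subseteq> W"
    using b2 W by (intro vec.span_minimal) auto
  then have "independent_family (b(m := a)) (Suc m)"
    using independent_family_fun_upd[OF b1] \<open>a \<notin> W\<close> by blast
  moreover have "null_family g (b(m := a)) (Suc m)"
    using nW b2 aa aW bilin_g_commute by (auto simp: less_Suc_eq)
  ultimately have "Suc m \<le> m" by (rule independent_null_family_le)
  then show False by simp
qed

lemma kernel_plus_image_eq:
  assumes W: "vec.subspace W"
    and inv1: "\<forall>x\<in>W. act x v \<in> W" and inv2: "\<forall>x\<in>W. act x w \<in> W"
    and vv: "bilin g v v = 0" and vw: "bilin g v w = 1"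
  shows "{x + y |x y. x \<in> {x\<in>W. act x v = 0} \<and> y \<in> (\<lambda>x. act x w) ` {x\<in>W. act x v = 0}} = W"
    (is "{x + y |x y. x \<in> ?K \<and> y \<in> ?T} = W")
proof (intro set_eqI iffI)
  fix z assume "z \<in> {x + y |x y. x \<in> ?K \<and> y \<in> ?T}"
  moreover have "?T \<subseteq> W" using inv2 by auto
  ultimately show "z \<in> W" using W by (auto intro: vec.subspace_add)
next
  fix z assume z: "z \<in> W"
  \<comment> \<open>the decomposition comes from the relation v w + w v = -2 with v null\<close>
  define x where "x = (- 1/2) *s act (act z w) v"
  define y where "y = act ((- 1/2) *s act z v) w"
  have "x \<in> ?K" unfolding x_def using z inv1 inv2 W
    by (simp add: gamma_act_scale_spinor gamma_act_neg_spinor act_act_null[OF vv] vec.subspace_scale vec.subspace_neg)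
  moreover have "(- 1/2) *s act z v \<in> ?K" using z inv1 W
    by (simp add: gamma_act_scale_spinor gamma_act_neg_spinor act_act_null[OF vv] vec.subspace_scale vec.subspace_neg)
  then have "y \<in> ?T" unfolding y_def by blast
  moreover have "z = x + y"
    unfolding x_def y_def gamma_act_scale_spinor using act_act_swap[of z v w] vw
    by (simp add: vec_eq_iff field_simps) (metis add.commute add.left_commute eq_neg_iff_add_eq_0)
  ultimately show "z \<in> {x + y |x y. x \<in> ?K \<and> y \<in> ?T}" by blast
qed

lemma dim_kernel_halves:
  assumes W: "vec.subspace W"
    and inv1: "\<forall>x\<in>W. act x v \<in> W" and inv2: "\<forall>x\<in>W. act x w \<in> W"
    and vv: "bilin g v v = 0" and vw: "bilin g v w = 1"
  shows "vec.dim W = 2 * vec.dim {x\<in>W. act x v = 0}"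
proof -
  define K where "K = {x\<in>W. act x v = 0}"
  define T where "T = (\<lambda>x. act x w) ` K"
  have sK: "vec.subspace K"
    unfolding K_def vec.subspace_def using W
    by (auto simp: gamma_act_add_spinor gamma_act_scale_spinor
        intro: vec.subspace_0 vec.subspace_add vec.subspace_scale)
  have sT: "vec.subspace T"
    unfolding T_def by (rule vec.linear_subspace_image[OF linear_gamma_act_spinor sK])
  have key: "act (act x v) w = (-2) *s x - act (act x w) v" for x
    using act_act_swap[of x v w] vw by simp
  have "inj_on (\<lambda>x. act x w) K"
  proof (rule inj_onI)
    fix x y assume x: "x \<in> K" and y: "y \<in> K" and e: "act x w = act y w"
    have "act (x - y) w = 0" using e by (simp add: gamma_act_diff_spinor)
    moreover have "act (x - y) v = 0" using vec.subspace_diff[OF sK x y] by (simp add: K_def)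
    ultimately have "(-2) *s (x - y) = 0" using key[of "x - y"] by simp
    then show "x = y" by (simp add: vec.scale_eq_0_iff)
  qed
  moreover have "vec.span K = K" using sK by simp
  ultimately have dT: "vec.dim T = vec.dim K"
    unfolding T_def by (metis vec.dim_image_eq[OF linear_gamma_act_spinor])
  have "K \<inter> T \<subseteq> {0}"
  proof
    fix y assume "y \<in> K \<inter> T"
    then obtain x where x: "x \<in> K" and y: "y = act x w" "act y v = 0" unfolding T_def K_def by auto
    have "act (act x v) w = 0" using x by (simp add: K_def)
    then have "(-2) *s x = 0" using key[of x] y by simp
    then show "y \<in> {0}" using y by (simp add: vec.scale_eq_0_iff)
  qed
  then have "vec.dim (K \<inter> T) = 0" using vec.dim_eq_0 by blast
  moreover have "vec.dim W + vec.dim (K \<inter> T) = vec.dim K + vec.dim T"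
    using vec.dim_sums_Int[OF sK sT] kernel_plus_image_eq[OF assms] unfolding K_def T_def by simp
  ultimately show ?thesis unfolding K_def[symmetric] using dT by linarith
qed

lemma dim_common_kernel:
  fixes v w :: "nat \<Rightarrow> complex^'i"
  assumes vv: "null_family g v m" and vw: "dual_families g v w m" and "j \<le> m"
  shows "2 ^ j * vec.dim {x. \<forall>i<j. act x (v i) = 0} = 2 ^ m"
  using \<open>j \<le> m\<close>
proof (induction j)
  case 0
  then show ?case using dimS vec_dim_card[where 'a=complex and 'n='j] by simp
next
  case (Suc j)
  let ?K = "\<lambda>j. {x. \<forall>i<j. act x (v i) = 0}"
  have sK: "vec.subspace (?K j)"
    unfolding vec.subspace_def by (simp add: gamma_act_add_spinor gamma_act_scale_spinor)
  have jm: "j < m" using Suc.prems by simp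
  have inv1: "\<forall>x\<in>?K j. act x (v j) \<in> ?K j"
    using vv jm by (auto simp: act_act_anticomm)
  have inv2: "\<forall>x\<in>?K j. act x (w j) \<in> ?K j"
  proof (intro ballI, simp, intro allI impI)
    fix x i assume x: "\<forall>i<j. act x (v i) = 0" and i: "i < j"
    have "bilin g (w j) (v i) = 0" using vw jm i bilin_g_commute by (metis less_trans nat_neq_iff)
    then show "act (act x (w j)) (v i) = 0" using act_act_anticomm x i by simp
  qed
  have "vec.dim (?K j) = 2 * vec.dim {x\<in>?K j. act x (v j) = 0}"
    by (rule dim_kernel_halves[OF sK inv1 inv2]) (use vv vw jm in auto)
  moreover have "{x\<in>?K j. act x (v j) = 0} = ?K (Suc j)" by (auto simp: less_Suc_eq)
  ultimately show ?case using Suc.IH Suc.prems by simp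
qed

lemma spinor_unique:
  fixes v w :: "nat \<Rightarrow> complex^'i"
  assumes vv: "null_family g v m" and vw: "dual_families g v w m"
    and phi: "\<phi> \<noteq> 0" "\<forall>i<m. act \<phi> (v i) = 0" and psi: "\<forall>i<m. act \<psi> (v i) = 0"
  obtains c where "\<psi> = c *s \<phi>"
proof -
  let ?K = "{x. \<forall>i<m. act x (v i) = 0}"
  have d: "vec.dim ?K = 1" using dim_common_kernel[OF vv vw, of m] by simp
  have sK: "vec.subspace ?K"
    unfolding vec.subspace_def by (simp add: gamma_act_add_spinor gamma_act_scale_spinor)
  obtain b where "independent_family b (vec.dim ?K)" "\<forall>i<vec.dim ?K. b i \<in> ?K"
    and b: "\<forall>x\<in>?K. \<exists>c. x = (\<Sum>i<vec.dim ?K. c i *s b i)"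
    by (rule subspace_obtain_basis_family[OF sK])
  obtain a where a: "\<phi> = a *s b 0" using b phi d by fastforce
  obtain c where c: "\<psi> = c *s b 0" using b psi d by fastforce
  have "a \<noteq> 0" using a phi by auto
  then have "\<psi> = (c / a) *s \<phi>" using a c by (simp add: vector_smult_assoc)
  then show ?thesis using that by blast
qed

lemma matrix_inv_bilin_dual_bases:
  fixes f f' :: "nat \<Rightarrow> complex^'i"
  assumes dual: "dual_families g f f' (CARD('i))"
  shows "(\<Sum>a\<in>UNIV. \<Sum>b\<in>UNIV. matrix_inv g $ a $ b * X $ a * Y $ b)
         = (\<Sum>k<CARD('i). dotc (f k) X * dotc (f' k) Y)"
proof -
  have gi: "g ** matrix_inv g = mat 1" using matrix_mul_matrix_inv[OF g_nondeg] by blast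
  define Z where "Z = matrix_inv g *v X"
  have XZ: "X = g *v Z" unfolding Z_def using gi by (simp add: matrix_vector_mul_assoc)
  obtain c where c: "Z = (\<Sum>l<CARD('i). c l *s f' l)"
    using independent_family_spans[OF independent_family_if_dual[OF dual]] .
  have fk: "dotc (f k) X = c k" if k: "k < CARD('i)" for k
  proof -
    have "dotc (f k) X = bilin g (f k) Z" by (simp add: XZ bilin_eq_dotc)
    also have "\<dots> = (\<Sum>l<CARD('i). c l * (if k = l then 1 else 0))"
      unfolding c by (simp add: bilin_sum_right bilin_scale_right) (rule sum.cong, auto simp: dual k)
    also have "\<dots> = c k" using k by (simp add: sum_lessThan_delta)
    finally show ?thesis .
  qed
  have "(\<Sum>a\<in>UNIV. \<Sum>b\<in>UNIV. matrix_inv g $ a $ b * X $ a * Y $ b) = dotc X (matrix_inv g *v Y)"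
    by (simp add: dotc_def matrix_vector_mult_def sum_distrib_left mult_ac)
  also have "\<dots> = dotc Z (transpose g *v (matrix_inv g *v Y))"
    unfolding XZ by (rule dotc_matrix_vector_mult)
  also have "\<dots> = dotc Z Y" using gi g_sym by (simp add: matrix_vector_mul_assoc)
  also have "\<dots> = (\<Sum>k<CARD('i). c k * dotc (f' k) Y)"
    unfolding c by (simp add: dotc_sum_left dotc_scale_left)
  also have "\<dots> = (\<Sum>k<CARD('i). dotc (f k) X * dotc (f' k) Y)"
    by (rule sum.cong) (auto simp: fk)
  finally show ?thesis .
qed

lemma contr_dual_bases:
  fixes f f' :: "nat \<Rightarrow> complex^'i"
  assumes dual: "dual_families g f f' (CARD('i))"
  shows "contr g \<gamma> \<alpha> \<beta> $ A $ B = (\<Sum>k<CARD('i). act \<alpha> (f k) $ A * act \<beta> (f' k) $ B)"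
proof -
  define X where "X = (\<chi> a. spin_act \<gamma> \<alpha> a $ A)"
  define Y where "Y = (\<chi> b. spin_act \<gamma> \<beta> b $ B)"
  have "contr g \<gamma> \<alpha> \<beta> $ A $ B = (\<Sum>a\<in>UNIV. \<Sum>b\<in>UNIV. matrix_inv g $ a $ b * X $ a * Y $ b)"
    by (simp add: contr_def X_def Y_def)
  also have "\<dots> = (\<Sum>k<CARD('i). dotc (f k) X * dotc (f' k) Y)"
    by (rule matrix_inv_bilin_dual_bases[OF dual])
  also have "\<dots> = (\<Sum>k<CARD('i). act \<alpha> (f k) $ A * act \<beta> (f' k) $ B)"
    by (simp add: gamma_act_eq_spin_act dotc_def X_def Y_def)
  finally show ?thesis .
qed

lemma unit_vector_orthogonal_to_hyperbolic:
  fixes n n' :: "nat \<Rightarrow> complex^'i"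
  assumes n_ind: "independent_family n m" and nn: "null_family g n m"
    and nn': "dual_families g n n' m" and n'n': "null_family g n' m"
  obtains u where "\<forall>i<m. bilin g u (n i) = 0" "\<forall>i<m. bilin g u (n' i) = 0" "bilin g u u = 1"
proof -
  define G where "G = append_family m n n'"
  have "independent_family G (m + m)" unfolding G_def
    by (rule independent_family_append[OF n_ind, where t=n]) (use nn nn' in auto)
  moreover have "m + m < vec.dim (UNIV :: (complex^'i) set)"
    using dimV vec_dim_card[where 'a=complex and 'n='i] by simp
  ultimately obtain z where zH: "independent_family (G(m + m := z)) (Suc (m + m))"
    using independent_family_extend_one[of G "m + m" UNIV] by auto
  define H where "H = G(m + m := z)"
  have cardi: "CARD('i) = Suc (m + m)" using dimV by simp
  \<comment> \<open>project z onto the orthogonal complement of the hyperbolic space spanned by n and n'\<close>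
  define u0 where "u0 = z - (\<Sum>i<m. bilin g z (n' i) *s n i) - (\<Sum>i<m. bilin g z (n i) *s n' i)"
  have n'n: "bilin g (n' i) (n j) = (if i = j then 1 else 0)" if "i < m" "j < m" for i j
    using nn' that by (subst bilin_g_commute) auto
  have u0n: "bilin g u0 (n j) = 0" and u0n': "bilin g u0 (n' j) = 0" if j: "j < m" for j
  proof -
    have "(\<Sum>i<m. bilin g z (n i) * bilin g (n' i) (n j)) = bilin g z (n j)"
      "(\<Sum>i<m. bilin g z (n' i) * bilin g (n i) (n' j)) = bilin g z (n' j)"
      using j nn' n'n by (simp_all add: sum_lessThan_kronecker)
    then show "bilin g u0 (n j) = 0" "bilin g u0 (n' j) = 0"
      using j nn n'n' by (simp_all add: u0_def bilin_simps)
  qed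
  have "u0 = z - (\<Sum>i<m + m. (\<lambda>i. if i < m then bilin g z (n' i) else bilin g z (n (i - m))) i *s G i)"
    unfolding G_def sum_append_family by (simp add: u0_def algebra_simps)
  then have "u0 \<noteq> 0"
    using independent_family_fun_upd_diff_ne_0[OF zH] by simp
  have "bilin g u0 u0 \<noteq> 0"
  proof
    assume q0: "bilin g u0 u0 = 0"
    have "bilin g u0 z = bilin g u0 u0"
      using u0n u0n' by (simp add: u0_def bilin_simps)
    then have "\<forall>k<CARD('i). bilin g u0 (H k) = 0"
      using q0 u0n u0n' cardi by (auto simp: H_def G_def append_family_def less_Suc_eq)
    then have "u0 = 0" using eq_0_if_orthogonal_to_basis zH cardi unfolding H_def by simp
    then show False using \<open>u0 \<noteq> 0\<close> by simp
  qed
  define u where "u = (1 / csqrt (bilin g u0 u0)) *s u0"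
  have "bilin g u u = bilin g u0 u0 / (csqrt (bilin g u0 u0))^2"
    by (simp add: u_def bilin_simps power2_eq_square)
  also have "\<dots> = 1" using \<open>bilin g u0 u0 \<noteq> 0\<close> by (simp add: power2_csqrt)
  finally have "bilin g u u = 1" .
  moreover have "\<forall>i<m. bilin g u (n i) = 0" "\<forall>i<m. bilin g u (n' i) = 0"
    using u0n u0n' by (simp_all add: u_def bilin_simps)
  ultimately show ?thesis using that by blast
qed

lemma dual_family_in_second_plane:
  assumes sA: "vec.subspace A" and sB: "vec.subspace Bp" and dB: "vec.dim Bp = m"
    and nA: "\<forall>X\<in>A. \<forall>Y\<in>A. bilin g X Y = 0" and nB: "\<forall>X\<in>Bp. \<forall>Y\<in>Bp. bilin g X Y = 0"
    and n: "independent_family n (r + k)" "\<forall>i<r + k. n i \<in> A"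
    and span: "\<forall>X\<in>A \<inter> Bp. \<exists>d. X = (\<Sum>i<r. d i *s n i)"
  shows "\<exists>y. (\<forall>j<k. y j \<in> Bp) \<and> dual_families g (\<lambda>i. n (r + i)) y k"
proof (rule dual_family_in_subspace[OF sB], intro allI impI)
  fix c i assume h: "\<forall>y\<in>Bp. bilin g (\<Sum>j<k. c j *s n (r + j)) y = 0" and i: "i < k"
  define a where "a = (\<Sum>j<k. c j *s n (r + j))"
  have aA: "a \<in> A" unfolding a_def using sA n(2)
    by (intro vec.subspace_sum vec.subspace_scale) auto
  \<comment> \<open>a is null and orthogonal to Bp, so maximality puts it into Bp\<close>
  have "a \<in> Bp"
    by (rule mem_maximal_null_subspace[OF sB dB nB]) (use nA aA h a_def in auto)
  then obtain d where d: "a = (\<Sum>i<r. d i *s n i)" using span aA by blast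
  define cc where "cc i = (if i < r then d i else - c (i - r))" for i
  have "(\<Sum>i<r + k. cc i *s n i) = (\<Sum>i<r. d i *s n i) - a"
    unfolding sum_lessThan_add a_def by (simp add: cc_def sum_negf)
  then have "(\<Sum>i<r + k. cc i *s n i) = 0" using d by simp
  then have "cc (r + i) = 0" using n(1) i unfolding independent_family_def by auto
  then show "c i = 0" by (simp add: cc_def)
qed

lemma null_dual_completion:
  assumes nn: "null_family g n N" and mrk: "N = r + k"
    and nB: "\<forall>X\<in>Bp. \<forall>Y\<in>Bp. bilin g X Y = 0" and nB': "\<forall>i<r. n i \<in> Bp" and y1: "\<forall>j<k. y j \<in> Bp"
    and y2: "dual_families g (\<lambda>i. n (r + i)) y k"
    and nx: "\<forall>i<N. \<forall>j<r. bilin g (n i) (x j) = (if i = j then 1 else 0)"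
    and yx: "\<And>l j. l < k \<Longrightarrow> j < r \<Longrightarrow> bilin g (y l) (x j) = 0"
  obtains n' where "dual_families g n n' N" "null_family g n' N" "\<forall>j<N. r \<le> j \<longrightarrow> n' j \<in> Bp"
proof -
  have rm: "r \<le> N" using mrk by simp
  have yn: "bilin g (y l) (n i) = 0" if "l < k" "i < r" for l i
    using nB nB' y1 that by auto
  define n' where "n' j = (if j < r then null_correction g n x r j else y (j - r))" for j
  have "dual_families g n n' N"
  proof (intro allI impI)
    fix i j assume i: "i < N" and j: "j < N"
    show "bilin g (n i) (n' j) = (if i = j then 1 else 0)"
    proof (cases "j < r")
      case True then show ?thesis using null_correction_dual[OF nn nx i _ rm] by (simp add: n'_def)
    next
      case False
      have "bilin g (n i) (y (j - r)) = (if i = j then 1 else 0)"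
      proof (cases "i < r")
        case True then show ?thesis using yn[of "j - r" i] False j mrk bilin_g_commute by auto
      next
        case i_ge: False
        then show ?thesis using y2[rule_format, of "i - r" "j - r"] False i j mrk by auto
      qed
      then show ?thesis using False by (simp add: n'_def)
    qed
  qed
  moreover have "null_family g n' N"
  proof (intro allI impI)
    have corr_y: "bilin g (y l) (null_correction g n x r j) = 0" if "l < k" "j < r" for l j
      using that yn yx by (intro bilin_null_correction_eq_0) auto
    fix i j assume "i < N" "j < N"
    then show "bilin g (n' i) (n' j) = 0"
      using null_correction_null[OF g_sym nn nx rm] corr_y nB y1 mrk bilin_g_commute
      by (auto simp: n'_def)
  qed
  moreover have "\<forall>j<N. r \<le> j \<longrightarrow> n' j \<in> Bp" using y1 mrk by (auto simp: n'_def)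
  ultimately show ?thesis using that by blast
qed

lemma witt_frame:
  assumes sA: "vec.subspace A" and sB: "vec.subspace Bp" and dA: "vec.dim A = m" and dB: "vec.dim Bp = m"
    and nA: "\<forall>X\<in>A. \<forall>Y\<in>A. bilin g X Y = 0" and nB: "\<forall>X\<in>Bp. \<forall>Y\<in>Bp. bilin g X Y = 0"
    and r: "r = vec.dim (A \<inter> Bp)"
  obtains n n' u where "\<forall>i<m. n i \<in> A" "\<forall>i<r. n i \<in> Bp" "\<forall>j<m. r \<le> j \<longrightarrow> n' j \<in> Bp"
    "null_family g n m" "null_family g n' m" "dual_families g n n' m"
    "\<forall>i<m. bilin g u (n i) = 0" "\<forall>i<m. bilin g u (n' i) = 0" "bilin g u u = 1"
proof -
  have rm: "r \<le> m" using vec.dim_subset[of "A \<inter> Bp" A] dA r by auto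
  obtain e where e1: "independent_family e r" and e2: "\<forall>i<r. e i \<in> A \<inter> Bp"
    and e3: "\<forall>X\<in>A \<inter> Bp. \<exists>d. X = (\<Sum>i<r. d i *s e i)"
    by (rule subspace_obtain_basis_family[OF vec.subspace_inter[OF sA sB], folded r])
  obtain n where n1: "independent_family n m" and n2: "\<forall>i<r. n i = e i" and n3: "\<forall>i<m. n i \<in> A"
    using independent_family_extend[OF e1, of A m] e2 rm dA by auto
  have nB': "\<forall>i<r. n i \<in> Bp" using n2 e2 by auto
  have nn: "null_family g n m" using nA n3 by blast
  define k where "k = m - r"
  have mrk: "m = r + k" using rm by (simp add: k_def)
  obtain y where y1: "\<forall>j<k. y j \<in> Bp" and y2: "dual_families g (\<lambda>i. n (r + i)) y k"
    using dual_family_in_second_plane[OF sA sB dB nA nB, of n r k] n1 n3 e3 n2 mrk by auto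
  have F_ind: "independent_family (append_family m n y) (m + k)"
    by (rule independent_family_append[OF n1, where t="\<lambda>l. n (r + l)"]) (use nn y2 mrk in auto)
  obtain x where x: "dual_families g (append_family m n y) x (m + k)"
    using dual_family_exists[OF F_ind] .
  have nx: "\<forall>i<m. \<forall>j<r. bilin g (n i) (x j) = (if i = j then 1 else 0)"
  proof (intro allI impI)
    fix i j assume "i < m" "j < r"
    then show "bilin g (n i) (x j) = (if i = j then 1 else 0)"
      using x[rule_format, of i j] rm by (simp add: append_family_def)
  qed
  have yx: "bilin g (y l) (x j) = 0" if "l < k" "j < r" for l j
    using x[rule_format, of "m + l" j] that rm by (simp add: append_family_def)
  obtain n' where "dual_families g n n' m" "null_family g n' m" "\<forall>j<m. r \<le> j \<longrightarrow> n' j \<in> Bp"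
    using null_dual_completion[OF nn mrk nB nB' y1 y2 nx yx] .
  moreover obtain u where "\<forall>i<m. bilin g u (n i) = 0" "\<forall>i<m. bilin g u (n' i) = 0" "bilin g u u = 1"
    using unit_vector_orthogonal_to_hyperbolic[OF n1 nn] \<open>dual_families g n n' m\<close> \<open>null_family g n' m\<close> by blast
  ultimately show ?thesis using that n3 nB' nn by blast
qed

end

section \<open>Two pure spinors in a frame adapted to their \<gamma>-planes\<close>

locale adapted_frame = spin_rep m g \<gamma>
  for m and g :: "complex^'i::finite^'i" and \<gamma> :: "'i \<Rightarrow> complex^'j::finite^'j" +
  fixes \<alpha> \<beta> :: "complex^'j" and n n' :: "nat \<Rightarrow> complex^'i" and u :: "complex^'i" and r :: nat
  assumes alpha_ne_0: "\<alpha> \<noteq> 0" and beta_ne_0: "\<beta> \<noteq> 0"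
    and not_proportional: "\<not> (\<exists>c. \<beta> = c *s \<alpha>)"
    and null_n: "null_family g n m" and null_n': "null_family g n' m" and dual_n_n': "dual_families g n n' m"
    and u_orth_n: "\<forall>i<m. bilin g u (n i) = 0" and u_orth_n': "\<forall>i<m. bilin g u (n' i) = 0" and u_unit: "bilin g u u = 1"
    and alpha_n: "\<And>i. i < m \<Longrightarrow> act \<alpha> (n i) = 0"
    and beta_n: "\<And>i. i < r \<Longrightarrow> act \<beta> (n i) = 0"
    and beta_n': "\<And>j. r \<le> j \<Longrightarrow> j < m \<Longrightarrow> act \<beta> (n' j) = 0"
begin

lemma dual_n'_n: "i < m \<Longrightarrow> j < m \<Longrightarrow> bilin g (n' i) (n j) = (if i = j then 1 else 0)"
  using dual_n_n' by (subst bilin_g_commute) auto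

lemma contr_frame:
  "contr g \<gamma> \<alpha> \<beta> $ A $ B
     = (\<Sum>i<m. act \<alpha> (n' i) $ A * act \<beta> (n i) $ B) + act \<alpha> u $ A * act \<beta> u $ B"
proof -
  have card: "CARD('i) = m + m + 1" using dimV by simp
  define f where "f = append_family (m + m) (append_family m n n') (\<lambda>_. u)"
  define f' where "f' = append_family (m + m) (append_family m n' n) (\<lambda>_. u)"
  have "dual_families g f f' (CARD('i))"
  proof (intro allI impI)
    fix k l assume k: "k < CARD('i)" and l: "l < CARD('i)"
    have fk: "f k = (if k < m then n k else if k < m + m then n' (k - m) else u)"
      and f'l: "f' l = (if l < m then n' l else if l < m + m then n (l - m) else u)"
      by (simp_all add: f_def f'_def append_family_def)
    have "(k - m = l - m) = (k = l)" if "\<not> k < m" "\<not> l < m" using that by auto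
    moreover have "bilin g (n i) u = 0" "bilin g (n' i) u = 0" if "i < m" for i
      using u_orth_n u_orth_n' that by (simp_all add: bilin_g_commute[of _ u])
    ultimately show "bilin g (f k) (f' l) = (if k = l then 1 else 0)"
      unfolding fk f'l using k l card null_n null_n' dual_n_n' dual_n'_n u_orth_n u_orth_n' u_unit
      by (cases "k < m"; cases "l < m"; cases "k < m + m"; cases "l < m + m") simp_all
  qed
  then have "contr g \<gamma> \<alpha> \<beta> $ A $ B = (\<Sum>k<m + m + 1. act \<alpha> (f k) $ A * act \<beta> (f' k) $ B)"
    using contr_dual_bases card by simp
  also have "\<dots> = (\<Sum>k<m. act \<alpha> (n k) $ A * act \<beta> (n' k) $ B)
      + (\<Sum>i<m. act \<alpha> (n' i) $ A * act \<beta> (n i) $ B) + act \<alpha> u $ A * act \<beta> u $ B"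
    unfolding sum_lessThan_add by (simp add: f_def f'_def append_family_def)
  finally show ?thesis using alpha_n by simp
qed

lemma alpha_unique:
  assumes "\<forall>i<m. act \<psi> (n i) = 0"
  obtains c where "\<psi> = c *s \<alpha>"
  using spinor_unique[OF null_n dual_n_n' alpha_ne_0] alpha_n assms by blast

lemma beta_unique:
  assumes "\<forall>i<r. act \<psi> (n i) = 0" "\<forall>j<m. r \<le> j \<longrightarrow> act \<psi> (n' j) = 0"
  obtains c where "\<psi> = c *s \<beta>"
proof -
  define nb where "nb i = (if i < r then n i else n' i)" for i
  define wb where "wb i = (if i < r then n' i else n i)" for i
  have "null_family g nb m" "dual_families g nb wb m"
    using null_n null_n' dual_n_n' dual_n'_n by (auto simp: nb_def wb_def)
  moreover have "\<forall>i<m. act \<beta> (nb i) = 0" "\<forall>i<m. act \<psi> (nb i) = 0"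
    using beta_n beta_n' assms by (auto simp: nb_def)
  ultimately show ?thesis using spinor_unique[of nb wb \<beta> \<psi>] beta_ne_0 that by blast
qed

lemma r_less_m: "r < m"
proof (rule ccontr)
  assume "\<not> r < m"
  then have "\<forall>i<m. act \<beta> (n i) = 0" using beta_n by auto
  then show False using alpha_unique not_proportional by blast
qed

lemma act_u_alpha:
  obtains \<epsilon> where "act \<alpha> u = \<epsilon> *s \<alpha>" "\<epsilon> * \<epsilon> = -1"
proof -
  have "\<forall>i<m. act (act \<alpha> u) (n i) = 0" using u_orth_n alpha_n by (simp add: act_act_anticomm)
  then obtain \<epsilon> where eps: "act \<alpha> u = \<epsilon> *s \<alpha>" using alpha_unique by blast
  have "(\<epsilon> * \<epsilon>) *s \<alpha> = act (act \<alpha> u) u"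
    by (simp add: eps gamma_act_scale_spinor vector_smult_assoc)
  also have "\<dots> = (- 1) *s \<alpha>" using act_act_self[of \<alpha> u] u_unit by simp
  finally have "\<epsilon> * \<epsilon> = -1" using alpha_ne_0 vec.scale_cancel_right by blast
  then show ?thesis using eps that by blast
qed

lemma act_u_beta:
  obtains \<epsilon>' where "act \<beta> u = \<epsilon>' *s \<beta>"
proof -
  have "\<forall>i<r. act (act \<beta> u) (n i) = 0" "\<forall>j<m. r \<le> j \<longrightarrow> act (act \<beta> u) (n' j) = 0"
    using u_orth_n u_orth_n' beta_n beta_n' r_less_m by (simp_all add: act_act_anticomm)
  then show ?thesis using beta_unique that by blast
qed

lemma act_n'_n: "i < m \<Longrightarrow> j < m \<Longrightarrow> act (act \<alpha> (n' i)) (n j) = (if i = j then (-2) *s \<alpha> else 0)"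
  using act_act_swap[of \<alpha> "n' i" "n j"] dual_n'_n alpha_n by simp

lemma act_u_n: "j < m \<Longrightarrow> act (act \<alpha> u) (n j) = 0"
  using act_act_anticomm[of u "n j" \<alpha>] u_orth_n alpha_n by simp

lemma act_n_n': "act x (n' j) = 0 \<Longrightarrow> j < m \<Longrightarrow> act (act x (n j)) (n' j) = (-2) *s x"
  using act_act_swap[of x "n j" "n' j"] dual_n_n' by simp

lemma act_beta_n_n'_other:
  "p < m \<Longrightarrow> j < m \<Longrightarrow> r \<le> j \<Longrightarrow> p \<noteq> j \<Longrightarrow> act (act \<beta> (n p)) (n' j) = 0"
  using act_act_anticomm[of "n p" "n' j" \<beta>] dual_n_n' beta_n' by simp

lemma act_beta_n_n'_same: "p < m \<Longrightarrow> r \<le> p \<Longrightarrow> act (act \<beta> (n p)) (n' p) = (-2) *s \<beta>"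
  using act_n_n'[of \<beta> p] beta_n' by simp

lemma contr_if_codim_1:
  assumes "r + 1 = m"
  shows "contr g \<gamma> \<alpha> \<beta> $ A $ B = \<alpha> $ A * \<beta> $ B - 2 * \<beta> $ A * \<alpha> $ B"
proof -
  have rm: "r < m" "m = Suc r" using assms by auto
  obtain \<epsilon> where eps: "act \<alpha> u = \<epsilon> *s \<alpha>" "\<epsilon> * \<epsilon> = -1" by (rule act_u_alpha)
  obtain \<epsilon>' where eps': "act \<beta> u = \<epsilon>' *s \<beta>" by (rule act_u_beta)
  obtain \<kappa> where lam: "act \<beta> (n r) = \<kappa> *s \<alpha>"
  proof (rule alpha_unique)
    show "\<forall>i<m. act (act \<beta> (n r)) (n i) = 0"
    proof (intro allI impI)
      fix i assume "i < m"
      then consider "i = r" | "i < r" using rm by linarith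
      then show "act (act \<beta> (n r)) (n i) = 0"
        by cases (use act_act_null act_act_anticomm[of "n r" "n i" \<beta>] null_n beta_n rm in auto)
    qed
  qed
  obtain \<mu> where mu: "act \<alpha> (n' r) = \<mu> *s \<beta>"
  proof (rule beta_unique)
    show "\<forall>i<r. act (act \<alpha> (n' r)) (n i) = 0" using act_n'_n rm by auto
    show "\<forall>j<m. r \<le> j \<longrightarrow> act (act \<alpha> (n' r)) (n' j) = 0"
      using act_act_null null_n' rm by (auto simp: le_less_Suc_eq)
  qed
  have "(\<mu> * \<kappa>) *s \<alpha> = act (act \<alpha> (n' r)) (n r)"
    by (simp add: mu lam gamma_act_scale_spinor vector_smult_assoc)
  also have "\<dots> = (-2) *s \<alpha>" using act_n'_n rm by simp
  finally have lm: "\<mu> * \<kappa> = -2" using alpha_ne_0 vec.scale_cancel_right by blast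
  have "(\<mu> * \<epsilon>') *s \<beta> = act (act \<alpha> (n' r)) u"
    by (simp add: mu eps' gamma_act_scale_spinor vector_smult_assoc)
  also have "\<dots> = - act (act \<alpha> u) (n' r)"
    using act_act_anticomm[of "n' r" u \<alpha>] u_orth_n' rm by (simp add: bilin_g_commute[of _ u])
  also have "\<dots> = (- \<epsilon> * \<mu>) *s \<beta>"
    by (simp add: eps gamma_act_scale_spinor mu vector_smult_assoc)
  finally have "\<mu> * \<epsilon>' = - \<epsilon> * \<mu>" using beta_ne_0 vec.scale_cancel_right by blast
  then have ee: "\<epsilon>' = - \<epsilon>" using lm by (metis minus_mult_left mult.commute mult_cancel_left mult_zero_left zero_neq_neg_numeral)
  have single: "(\<Sum>i<m. act \<alpha> (n' i) $ A * act \<beta> (n i) $ B) = act \<alpha> (n' r) $ A * act \<beta> (n r) $ B"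
    using beta_n rm by simp
  have "contr g \<gamma> \<alpha> \<beta> $ A $ B = (\<mu> * \<kappa>) * (\<beta> $ A * \<alpha> $ B) - (\<epsilon> * \<epsilon>) * (\<alpha> $ A * \<beta> $ B)"
    unfolding contr_frame single by (simp add: mu lam eps(1) eps' ee algebra_simps)
  then show ?thesis using lm eps(2) by simp
qed

lemma act_n'_n'_beta_multiple:
  assumes "r + 2 = m"
  obtains c where "act (act \<alpha> (n' r)) (n' (Suc r)) = c *s \<beta>"
proof (rule beta_unique)
  let ?\<psi> = "act (act \<alpha> (n' r)) (n' (Suc r))"
  show "\<forall>i<r. act ?\<psi> (n i) = 0"
    using act_act_anticomm[of "n' (Suc r)" "n i" "act \<alpha> (n' r)" for i] act_n'_n dual_n'_n assms by auto
  have "act ?\<psi> (n' r) = 0"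
    using act_act_anticomm[of "n' (Suc r)" "n' r" "act \<alpha> (n' r)"] act_act_null null_n' assms by simp
  moreover have "act ?\<psi> (n' (Suc r)) = 0" using act_act_null null_n' assms by simp
  ultimately show "\<forall>j<m. r \<le> j \<longrightarrow> act ?\<psi> (n' j) = 0"
    using assms by (auto simp: le_less_Suc_eq less_Suc_eq)
qed

lemma contr_sym_if_codim_2:
  assumes "r + 2 = m"
  shows "contr g \<gamma> \<alpha> \<beta> $ A $ B + contr g \<gamma> \<alpha> \<beta> $ B $ A = - (\<alpha> $ A * \<beta> $ B + \<alpha> $ B * \<beta> $ A)"
proof -
  define p where "p = r"
  define q where "q = Suc r"
  have pm: "p < m" "q < m" "p \<noteq> q" "m = Suc (Suc p)" using assms by (auto simp: p_def q_def)
  obtain \<epsilon> where eps: "act \<alpha> u = \<epsilon> *s \<alpha>" "\<epsilon> * \<epsilon> = -1" by (rule act_u_alpha)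
  obtain \<epsilon>' where eps': "act \<beta> u = \<epsilon>' *s \<beta>" by (rule act_u_beta)
  define \<psi> where "\<psi> = act (act \<alpha> (n' p)) (n' q)"
  obtain c where c: "\<psi> = c *s \<beta>"
    using act_n'_n'_beta_multiple[OF assms] unfolding \<psi>_def p_def q_def .
  have psi_nq: "act \<psi> (n q) = (-2) *s act \<alpha> (n' p)"
    using act_act_swap[of "act \<alpha> (n' p)" "n' q" "n q"] dual_n'_n[of q q] act_n'_n[of p q] pm by (simp add: \<psi>_def)
  have psi_np: "act \<psi> (n p) = 2 *s act \<alpha> (n' q)"
  proof -
    have "act \<psi> (n p) = - act (act (act \<alpha> (n' p)) (n p)) (n' q)"
      using act_act_anticomm[of "n' q" "n p" "act \<alpha> (n' p)"] dual_n'_n[of q p] pm by (simp add: \<psi>_def)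
    also have "\<dots> = 2 *s act \<alpha> (n' q)"
      using act_n'_n[of p p] pm by (simp add: gamma_act_scale_spinor gamma_act_neg_spinor)
    finally show ?thesis .
  qed
  have "c \<noteq> 0"
  proof
    assume "c = 0"
    then have "act \<alpha> (n' p) = 0" using psi_nq c by (simp add: vec.scale_eq_0_iff)
    then show False using act_n'_n[of p p] pm alpha_ne_0 by (simp add: vec.scale_eq_0_iff)
  qed
  have bp: "act \<beta> (n p) = (2 / c) *s act \<alpha> (n' q)"
    using psi_np c \<open>c \<noteq> 0\<close> by (simp add: gamma_act_scale_spinor vec_eq_iff field_simps)
  have bq: "act \<beta> (n q) = (-2 / c) *s act \<alpha> (n' p)"
    using psi_nq c \<open>c \<noteq> 0\<close> by (simp add: gamma_act_scale_spinor vec_eq_iff field_simps)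
  have "\<epsilon>' *s \<psi> = act \<psi> u"
    by (simp add: c gamma_act_scale_spinor eps' vector_smult_assoc mult.commute)
  also have "\<dots> = - act (act (act \<alpha> (n' p)) u) (n' q)"
    using act_act_anticomm[of "n' q" u "act \<alpha> (n' p)"] u_orth_n' pm by (simp add: \<psi>_def bilin_g_commute[of _ u])
  also have "act (act \<alpha> (n' p)) u = (- \<epsilon>) *s act \<alpha> (n' p)"
    using act_act_anticomm[of "n' p" u \<alpha>] u_orth_n' pm eps by (simp add: bilin_g_commute[of _ u] gamma_act_scale_spinor)
  finally have "\<epsilon>' *s \<psi> = \<epsilon> *s \<psi>" by (simp add: gamma_act_scale_spinor gamma_act_neg_spinor \<psi>_def)
  moreover have "\<psi> \<noteq> 0" using c \<open>c \<noteq> 0\<close> beta_ne_0 by (simp add: vec.scale_eq_0_iff)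
  ultimately have ee: "\<epsilon>' = \<epsilon>" using vec.scale_cancel_right by blast
  have two: "(\<Sum>i<m. act \<alpha> (n' i) $ A * act \<beta> (n i) $ B)
      = act \<alpha> (n' p) $ A * act \<beta> (n p) $ B + act \<alpha> (n' q) $ A * act \<beta> (n q) $ B" for A B
    using beta_n pm by (simp add: p_def q_def)
  have "contr g \<gamma> \<alpha> \<beta> $ A $ B + contr g \<gamma> \<alpha> \<beta> $ B $ A
      = (\<epsilon> * \<epsilon>) * (\<alpha> $ A * \<beta> $ B + \<alpha> $ B * \<beta> $ A)"
    unfolding contr_frame two by (simp add: bp bq eps(1) eps' ee) (simp add: algebra_simps)
  then show ?thesis using eps(2) by simp
qed

lemma sum_act_n'_n:
  assumes "p < m"
  shows "(\<Sum>i<m. act (act \<alpha> (n' i)) (n p) $ A * Y i) = -2 * \<alpha> $ A * Y p"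
    and "(\<Sum>i<m. Y i * act (act \<alpha> (n' i)) (n p) $ A) = Y p * (-2 * \<alpha> $ A)"
proof -
  have "(\<Sum>i<m. act (act \<alpha> (n' i)) (n p) $ A * Y i) = (\<Sum>i<m. (-2 * \<alpha> $ A * Y i) * (if i = p then 1 else 0))"
    "(\<Sum>i<m. Y i * act (act \<alpha> (n' i)) (n p) $ A) = (\<Sum>i<m. (-2 * \<alpha> $ A * Y i) * (if i = p then 1 else 0))"
    by (rule sum.cong, simp, use act_n'_n assms in auto)+
  then show "(\<Sum>i<m. act (act \<alpha> (n' i)) (n p) $ A * Y i) = -2 * \<alpha> $ A * Y p"
    "(\<Sum>i<m. Y i * act (act \<alpha> (n' i)) (n p) $ A) = Y p * (-2 * \<alpha> $ A)"
    using assms by (simp_all only: sum_lessThan_delta) simp_all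
qed

lemma act_beta_n_not_multiple:
  assumes "Suc r < m"
  shows "act \<beta> (n r) \<noteq> \<kappa> *s \<alpha>"
proof
  assume lam: "act \<beta> (n r) = \<kappa> *s \<alpha>"
  have "act (act \<beta> (n r)) (n' (Suc r)) = 0" using act_beta_n_n'_other assms by simp
  moreover have "act (act \<beta> (n r)) (n (Suc r)) = 0" using alpha_n[OF assms] by (simp add: lam gamma_act_scale_spinor)
  ultimately have "act \<beta> (n r) = 0" using act_n_n'[of "act \<beta> (n r)" "Suc r"] assms by (simp add: vec.scale_eq_0_iff)
  then have "(-2) *s \<beta> = 0" using act_beta_n_n'_same[of r] assms by simp
  then show False using beta_ne_0 by (simp add: vec.scale_eq_0_iff)
qed

lemma act_beta_n_n_not_multiple:
  assumes "Suc (Suc r) < m"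
  shows "act (act \<beta> (n r)) (n (Suc r)) \<noteq> \<kappa> *s \<alpha>"
proof
  let ?p = r and ?q = "Suc r" and ?t = "Suc (Suc r)"
  let ?w = "act (act \<beta> (n ?p)) (n ?q)"
  assume lam: "?w = \<kappa> *s \<alpha>"
  have "act (act \<beta> (n ?p)) (n' ?t) = 0" using act_beta_n_n'_other assms by simp
  then have "act ?w (n' ?t) = 0"
    using act_act_anticomm[of "n ?q" "n' ?t" "act \<beta> (n ?p)"] dual_n_n' assms by simp
  moreover have "act ?w (n ?t) = 0" using alpha_n[OF assms] by (simp add: lam gamma_act_scale_spinor)
  ultimately have "?w = 0" using act_n_n'[of ?w ?t] assms by (simp add: vec.scale_eq_0_iff)
  moreover have "act (act \<beta> (n ?p)) (n' ?q) = 0" using act_beta_n_n'_other assms by simp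
  ultimately have "act \<beta> (n ?p) = 0" using act_n_n'[of "act \<beta> (n ?p)" ?q] assms by (simp add: vec.scale_eq_0_iff)
  then have "(-2) *s \<beta> = 0" using act_beta_n_n'_same[of ?p] assms by simp
  then show False using beta_ne_0 by (simp add: vec.scale_eq_0_iff)
qed

lemma codim_1_if_contr:
  assumes hyp: "\<forall>A B. contr g \<gamma> \<alpha> \<beta> $ A $ B = \<alpha> $ A * \<beta> $ B - 2 * \<beta> $ A * \<alpha> $ B"
  shows "r + 1 = m"
proof (rule ccontr)
  assume "r + 1 \<noteq> m"
  then have pm: "r < m" "Suc r < m" using r_less_m by auto
  define x where "x = append_family m (\<lambda>i. act \<alpha> (n' i)) (\<lambda>j. if j = 0 then act \<alpha> u else if j = 1 then \<alpha> else \<beta>)"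
  define y where "y = append_family m (\<lambda>i. act \<beta> (n i)) (\<lambda>j. if j = 0 then act \<beta> u else if j = 1 then - \<beta> else 2 *s \<alpha>)"
  have split3: "(\<Sum>l<m + 3. F l) = (\<Sum>l<m. F l) + F m + F (m + 1) + F (m + 2)" for F :: "nat \<Rightarrow> complex"
    by (simp add: sum_lessThan_add numeral_3_eq_3)
  have "\<forall>A B. (\<Sum>l\<in>{..<m + 3}. x l $ A * y l $ B) = 0"
  proof (intro allI)
    fix A B
    have "(\<Sum>l\<in>{..<m + 3}. x l $ A * y l $ B) = contr g \<gamma> \<alpha> \<beta> $ A $ B - \<alpha> $ A * \<beta> $ B + 2 * \<beta> $ A * \<alpha> $ B"
      unfolding split3 contr_frame by (simp add: x_def y_def append_family_def)
    then show "(\<Sum>l\<in>{..<m + 3}. x l $ A * y l $ B) = 0" using hyp by simp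
  qed
  then have T1: "\<forall>A B. (\<Sum>l\<in>{..<m + 3}. act (x l) (n r) $ A * y l $ B) = 0"
    by (rule gamma_act_rank_sum_zero(1)[rotated]) simp
  have "\<forall>A B. \<alpha> $ A * act \<beta> (n r) $ B = act \<beta> (n r) $ A * \<alpha> $ B"
  proof (intro allI)
    fix A B
    have "(\<Sum>l\<in>{..<m + 3}. act (x l) (n r) $ A * y l $ B) = -2 * \<alpha> $ A * act \<beta> (n r) $ B + 2 * act \<beta> (n r) $ A * \<alpha> $ B"
      unfolding split3 using sum_act_n'_n(1)[OF pm(1), of A "\<lambda>i. act \<beta> (n i) $ B"] act_u_n[OF pm(1)] alpha_n[OF pm(1)]
      by (simp add: x_def y_def append_family_def)
    then show "\<alpha> $ A * act \<beta> (n r) $ B = act \<beta> (n r) $ A * \<alpha> $ B" using T1 by simp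
  qed
  then show False
    using proportional_if_rank_one_symmetric[OF alpha_ne_0] act_beta_n_not_multiple[OF pm(2)] by metis
qed

lemma codim_le_2_if_contr_sym:
  assumes hyp: "\<forall>A B. contr g \<gamma> \<alpha> \<beta> $ A $ B + contr g \<gamma> \<alpha> \<beta> $ B $ A = - (\<alpha> $ A * \<beta> $ B + \<alpha> $ B * \<beta> $ A)"
  shows "m \<le> r + 2"
proof (rule ccontr)
  assume "\<not> m \<le> r + 2"
  then have pm: "r < m" "Suc r < m" "Suc (Suc r) < m" by auto
  let ?p = r and ?q = "Suc r"
  define x where "x = append_family m (\<lambda>i. act \<alpha> (n' i)) (append_family m (\<lambda>i. act \<beta> (n i))
    (\<lambda>j. if j = 0 then act \<alpha> u else if j = 1 then act \<beta> u else if j = 2 then \<alpha> else \<beta>))"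
  define y where "y = append_family m (\<lambda>i. act \<beta> (n i)) (append_family m (\<lambda>i. act \<alpha> (n' i))
    (\<lambda>j. if j = 0 then act \<beta> u else if j = 1 then act \<alpha> u else if j = 2 then \<beta> else \<alpha>))"
  have split4: "(\<Sum>l<m + (m + 4). F l)
      = (\<Sum>l<m. F l) + (\<Sum>l<m. F (m + l)) + F (m + m) + F (m + m + 1) + F (m + m + 2) + F (m + m + 3)"
    for F :: "nat \<Rightarrow> complex"
    by (simp add: sum_lessThan_add numeral_3_eq_3 eval_nat_numeral add.assoc)
  have "\<forall>A B. (\<Sum>l\<in>{..<m + (m + 4)}. x l $ A * y l $ B) = 0"
  proof (intro allI)
    fix A B
    have "(\<Sum>l\<in>{..<m + (m + 4)}. x l $ A * y l $ B) = contr g \<gamma> \<alpha> \<beta> $ A $ B + contr g \<gamma> \<alpha> \<beta> $ B $ A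
        + (\<alpha> $ A * \<beta> $ B + \<alpha> $ B * \<beta> $ A)"
      unfolding split4 contr_frame by (simp add: x_def y_def append_family_def mult.commute)
    then show "(\<Sum>l\<in>{..<m + (m + 4)}. x l $ A * y l $ B) = 0" using hyp[rule_format, of A B] by simp
  qed
  then have "\<forall>A B. (\<Sum>l\<in>{..<m + (m + 4)}. act (x l) (n ?p) $ A * y l $ B) = 0"
    by (rule gamma_act_rank_sum_zero(1)[rotated]) simp
  then have T2: "\<forall>A B. (\<Sum>l\<in>{..<m + (m + 4)}. act (x l) (n ?p) $ A * act (y l) (n ?q) $ B) = 0"
    by (rule gamma_act_rank_sum_zero(2)[rotated]) simp
  let ?w = "act (act \<beta> (n ?p)) (n ?q)"
  have bqp: "act (act \<beta> (n ?q)) (n ?p) = - ?w"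
    using act_act_anticomm[of "n ?q" "n ?p" \<beta>] null_n pm by simp
  have "\<forall>A B. \<alpha> $ A * ?w $ B = ?w $ A * \<alpha> $ B"
  proof (intro allI)
    fix A B
    have "(\<Sum>l\<in>{..<m + (m + 4)}. act (x l) (n ?p) $ A * act (y l) (n ?q) $ B)
        = -2 * \<alpha> $ A * ?w $ B + (- ?w $ A) * (-2 * \<alpha> $ B)"
      unfolding split4
      using sum_act_n'_n(1)[OF pm(1), of A "\<lambda>i. act (act \<beta> (n i)) (n ?q) $ B"]
        sum_act_n'_n(2)[OF pm(2), where A = B and Y = "\<lambda>i. act (act \<beta> (n i)) (n ?p) $ A"]
        act_u_n[OF pm(1)] act_u_n[OF pm(2)] alpha_n[OF pm(1)] alpha_n[OF pm(2)] bqp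
      by (simp add: x_def y_def append_family_def)
    then show "\<alpha> $ A * ?w $ B = ?w $ A * \<alpha> $ B" using T2 by simp
  qed
  then show False
    using proportional_if_rank_one_symmetric[OF alpha_ne_0] act_beta_n_n_not_multiple[OF pm(3)] by metis
qed

lemma codim_iff_contr:
  "r = m - 1 \<longleftrightarrow> (\<forall>A B. contr g \<gamma> \<alpha> \<beta> $ A $ B = \<alpha> $ A * \<beta> $ B - 2 * \<beta> $ A * \<alpha> $ B)"
  using contr_if_codim_1 codim_1_if_contr r_less_m by fastforce

lemma codim_le_2_iff_contr_sym:
  "(\<exists>k\<in>{1, 2}. k \<le> m \<and> r = m - k)
     \<longleftrightarrow> (\<forall>A B. (contr g \<gamma> \<alpha> \<beta> $ A $ B + contr g \<gamma> \<alpha> \<beta> $ B $ A) / 2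
                = - ((\<alpha> $ A * \<beta> $ B + \<alpha> $ B * \<beta> $ A) / 2))"
    (is "?codim \<longleftrightarrow> (\<forall>A B. ?sym A B)")
proof
  assume ?codim
  then consider "r + 1 = m" | "r + 2 = m" using r_less_m by auto
  then show "\<forall>A B. ?sym A B"
  proof cases
    case 1 then show ?thesis by (simp add: contr_if_codim_1 field_simps)
  next
    case 2
    show ?thesis
    proof (intro allI)
      fix A B
      show "?sym A B" by (simp only: contr_sym_if_codim_2[OF 2]) (simp add: field_simps)
    qed
  qed
next
  assume sym: "\<forall>A B. ?sym A B"
  have "m \<le> r + 2"
  proof (intro codim_le_2_if_contr_sym allI)
    fix A B
    show "contr g \<gamma> \<alpha> \<beta> $ A $ B + contr g \<gamma> \<alpha> \<beta> $ B $ A = - (\<alpha> $ A * \<beta> $ B + \<alpha> $ B * \<beta> $ A)"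
      using sym[rule_format, of A B] by (metis divide_cancel_right minus_divide_left zero_neq_numeral)
  qed
  then show ?codim using r_less_m by (intro bexI[of _ "m - r"]) auto
qed

end

theorem proposition2p10:
  fixes m :: nat
    and g :: "complex^'i^'i"
    and \<gamma> :: "'i \<Rightarrow> complex^'j^'j"
    and \<alpha> \<beta> :: "complex^'j"
  assumes dimV: "CARD('i) = 2 * m + 1"
    and dimS: "CARD('j) = 2 ^ m"
    and g_sym: "transpose g = g"
    and g_nondeg: "invertible g"
    and cliff: "clifford_rel g \<gamma>"
    and pure_a: "pure_spinor \<gamma> m \<alpha>"
    and pure_b: "pure_spinor \<gamma> m \<beta>"
    and nonprop: "\<not> (\<exists>c. \<beta> = c *s \<alpha>)"
  shows "((totally_null g (gamma_plane \<gamma> \<alpha> \<inter> gamma_plane \<gamma> \<beta>) \<and>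
            vec.dim (gamma_plane \<gamma> \<alpha> \<inter> gamma_plane \<gamma> \<beta>) = m - 1)
          \<longleftrightarrow> (\<forall>A B. contr g \<gamma> \<alpha> \<beta> $ A $ B = \<alpha> $ A * \<beta> $ B - 2 * \<beta> $ A * \<alpha> $ B
                   \<and> \<alpha> $ A * \<beta> $ B - 2 * \<beta> $ A * \<alpha> $ B
                     = - ((\<alpha> $ A * \<beta> $ B + \<alpha> $ B * \<beta> $ A) / 2)
                       + 3 * ((\<alpha> $ A * \<beta> $ B - \<alpha> $ B * \<beta> $ A) / 2)))
       \<and> ((\<exists>k\<in>{1, 2}. k \<le> m \<and> totally_null g (gamma_plane \<gamma> \<alpha> \<inter> gamma_plane \<gamma> \<beta>) \<and>
            vec.dim (gamma_plane \<gamma> \<alpha> \<inter> gamma_plane \<gamma> \<beta>) = m - k)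
          \<longleftrightarrow> (\<forall>A B. (contr g \<gamma> \<alpha> \<beta> $ A $ B + contr g \<gamma> \<alpha> \<beta> $ B $ A) / 2
                     = - ((\<alpha> $ A * \<beta> $ B + \<alpha> $ B * \<beta> $ A) / 2)))"
proof -
  interpret spin_rep m g \<gamma> using dimV dimS g_sym g_nondeg cliff by unfold_locales
  let ?PA = "gamma_plane \<gamma> \<alpha>" and ?PB = "gamma_plane \<gamma> \<beta>"
  have a0: "\<alpha> \<noteq> 0" "vec.dim ?PA = m" and b0: "\<beta> \<noteq> 0" "vec.dim ?PB = m"
    using pure_a pure_b by (auto simp: pure_spinor_def)
  have nA: "\<forall>X\<in>?PA. \<forall>Y\<in>?PA. bilin g X Y = 0" and nB: "\<forall>X\<in>?PB. \<forall>Y\<in>?PB. bilin g X Y = 0"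
    using bilin_eq_0_if_annihilate a0 b0 by (auto simp: gamma_plane_eq)
  then have tn: "totally_null g (?PA \<inter> ?PB)" unfolding totally_null_def by blast
  obtain n n' u where frame: "\<forall>i<m. n i \<in> ?PA" "\<forall>i<vec.dim (?PA \<inter> ?PB). n i \<in> ?PB"
    "\<forall>j<m. vec.dim (?PA \<inter> ?PB) \<le> j \<longrightarrow> n' j \<in> ?PB"
    "null_family g n m" "null_family g n' m" "dual_families g n n' m"
    "\<forall>i<m. bilin g u (n i) = 0" "\<forall>i<m. bilin g u (n' i) = 0" "bilin g u u = 1"
    by (rule witt_frame[OF subspace_gamma_plane subspace_gamma_plane a0(2) b0(2) nA nB refl])
  interpret adapted_frame m g \<gamma> \<alpha> \<beta> n n' u "vec.dim (?PA \<inter> ?PB)"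
    by unfold_locales (use a0 b0 nonprop frame in \<open>simp_all add: gamma_plane_eq\<close>)
  have "(\<forall>A B. contr g \<gamma> \<alpha> \<beta> $ A $ B = \<alpha> $ A * \<beta> $ B - 2 * \<beta> $ A * \<alpha> $ B
           \<and> \<alpha> $ A * \<beta> $ B - 2 * \<beta> $ A * \<alpha> $ B
             = - ((\<alpha> $ A * \<beta> $ B + \<alpha> $ B * \<beta> $ A) / 2) + 3 * ((\<alpha> $ A * \<beta> $ B - \<alpha> $ B * \<beta> $ A) / 2))
      \<longleftrightarrow> (\<forall>A B. contr g \<gamma> \<alpha> \<beta> $ A $ B = \<alpha> $ A * \<beta> $ B - 2 * \<beta> $ A * \<alpha> $ B)"
    by (simp add: field_simps)
  then show ?thesis using codim_iff_contr codim_le_2_iff_contr_sym tn by simp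
qed

end
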